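(* For $g\ge1$, the exact sequence \[1\to\mathcal{M}_{0,1}^{2g}\to\mathcal{M}_{0,\mathrm{half}}^{2g}\to\mathbb{Z}/2\mathbb{Z}\to1\] splits. Here the second map sends $[T]$ to $T|_{\partial D^2}\in\langle s\rangle\cong\mathbb{Z}/2\mathbb{Z}$.
   Context: Let $p_1,\dots,p_{2g}$ be distinct points in the interior of $D^2$, and let $s:\partial D^2\to\partial D^2$ be the half rotation. $\mathcal{M}_{0,\mathrm{half}}^{2g}$ is the group of path components of $\{T\in\mathrm{Diff}_+(D^2): T(\{p_1,\dots,p_{2g}\})=\{p_1,\dots,p_{2g}\},\ T|_{\partial D^2}\in\{s,\mathrm{id}_{\partial D^2}\}\}$. $\mathcal{M}_{0,1}^{2g}$ is the mapping class group of $D^2$ relative to the boundary (pointwise) and the set $\{p_1,\dots,p_{2g}\}$; it is the kernel of the restriction-to-boundary map. *)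

theory Defs
  imports "HOL-Analysis.Analysis" "HOL-Algebra.Elementary_Groups"
begin

definition disk :: "complex set" where "disk = cball 0 1"
definition circle :: "complex set" where "circle = sphere 0 1"
definition half_rot :: "complex \<Rightarrow> complex" where "half_rot z = - z"

text \<open>Directional (partial) derivative of f in direction v, taken within the
  closed disk (so it is meaningful up to the boundary); iterated partials.\<close>

definition dpart :: "complex \<Rightarrow> (complex \<Rightarrow> complex) \<Rightarrow> complex \<Rightarrow> complex" where
  "dpart v f = (\<lambda>x. frechet_derivative f (at x within disk) v)"

definition dparts :: "complex list \<Rightarrow> (complex \<Rightarrow> complex) \<Rightarrow> complex \<Rightarrow> complex" where
  "dparts vs f = foldr dpart vs f"

text \<open>C^infinity on the closed disk: all iterated partial derivatives (in the
  coordinate directions 1 and i) exist up to the boundary.\<close>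

definition smooth_disk :: "(complex \<Rightarrow> complex) \<Rightarrow> bool" where
  "smooth_disk f \<longleftrightarrow>
     (\<forall>vs\<in>lists {1, \<i>}. \<forall>x\<in>disk. dparts vs f differentiable (at x within disk))"

text \<open>Jacobian determinant of f at x (real 2x2 determinant).\<close>

definition jac_det :: "(complex \<Rightarrow> complex) \<Rightarrow> complex \<Rightarrow> real" where
  "jac_det f x = Im (cnj (dpart 1 f x) * dpart \<i> f x)"

text \<open>Orientation-preserving diffeomorphisms of D^2 (functions are only
  relevant on the disk).\<close>

definition Diff_plus :: "(complex \<Rightarrow> complex) set" where
  "Diff_plus = {T. T ` disk = disk \<and> inj_on T disk \<and> smooth_disk T
                  \<and> smooth_disk (inv_into disk T) \<and> (\<forall>x\<in>disk. jac_det T x > 0)}"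

text \<open>The set whose path components form M_{0,half}^{2g}.\<close>

definition half_set :: "complex set \<Rightarrow> (complex \<Rightarrow> complex) set" where
  "half_set P = {T \<in> Diff_plus. T ` P = P \<and>
      ((\<forall>x\<in>circle. T x = half_rot x) \<or> (\<forall>x\<in>circle. T x = x))}"

text \<open>Continuous paths in the C^infinity topology: all iterated partial
  derivatives depend jointly continuously on (t,x).\<close>

definition smooth_path_in :: "(complex \<Rightarrow> complex) set \<Rightarrow> (real \<Rightarrow> complex \<Rightarrow> complex) \<Rightarrow> bool" where
  "smooth_path_in S H \<longleftrightarrow> (\<forall>t\<in>{0..1}. H t \<in> S) \<and>
     (\<forall>vs\<in>lists {1, \<i>}. continuous_on ({0..1} \<times> disk) (\<lambda>(t,x). dparts vs (H t) x))"

text \<open>Same path component in S (maps are compared on the disk only).\<close>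

definition pc_rel :: "(complex \<Rightarrow> complex) set \<Rightarrow> ((complex \<Rightarrow> complex) \<times> (complex \<Rightarrow> complex)) set" where
  "pc_rel S = {(T, T'). T \<in> S \<and> T' \<in> S \<and>
     (\<exists>H. smooth_path_in S H \<and> (\<forall>x\<in>disk. H 0 x = T x) \<and> (\<forall>x\<in>disk. H 1 x = T' x))}"

definition MCG_half :: "complex set \<Rightarrow> (complex \<Rightarrow> complex) set monoid" where
  "MCG_half P = \<lparr> carrier = half_set P // pc_rel (half_set P),
      monoid.mult = (\<lambda>A B. pc_rel (half_set P) `` {(SOME a. a \<in> A) \<circ> (SOME b. b \<in> B)}),
      one = pc_rel (half_set P) `` {id} \<rparr>"

text \<open>The map [T] \<mapsto> T restricted to the boundary, in <s> = Z/2Z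
  (1 = half rotation, 0 = identity).\<close>

definition bdry_class :: "(complex \<Rightarrow> complex) set \<Rightarrow> int" where
  "bdry_class A = (if (\<forall>x\<in>circle. (SOME T. T \<in> A) x = half_rot x) then 1 else 0)"

end

theory Submission
  imports Defs "HOL-Complex_Analysis.Complex_Analysis"
begin

text \<open>The 2g marked points can be paired off, so there is an orientation-preserving diffeomorphism
  \<open>\<psi>\<close> of D^2, fixing the boundary pointwise, that carries them onto a set invariant under
  \<open>z \<mapsto> -z\<close>. Then \<open>T = \<psi>\<inverse> \<circ> (-) \<circ> \<psi>\<close> preserves the marked points, is the half rotation on the
  boundary and is an involution on the nose, so \<open>1 \<mapsto> [T]\<close> is a section. The diffeomorphism \<open>\<psi>\<close>
  is built point by point: a single point is moved, keeping the boundary and finitely many other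
  points fixed, by conjugating a twist \<open>z \<mapsto> z exp(i \<theta>(|z|\<^sup>2))\<close> with a Moebius automorphism
  of the disk.\<close>

section \<open>Derivatives within the closed disk\<close>

lemma has_derivative_within_disk_unique:
  assumes x: "x \<in> disk" and D1: "(f has_derivative D1) (at x within disk)"
    and D2: "(f has_derivative D2) (at x within disk)"
  shows "D1 = D2"
proof -
  have lin: "linear D1" "linear D2" using D1 D2 has_derivative_linear by blast+
  have on_chords: "D1 (y - x) = D2 (y - x)" if y: "y \<in> disk" for y
  proof -
    define g where "g = (\<lambda>s::real. x + s *\<^sub>R (y - x))"
    have g: "(g has_derivative (\<lambda>s. s *\<^sub>R (y - x))) (at 0 within {0..1})"
      unfolding g_def by (auto intro!: derivative_eq_intros)
    have sub: "g ` {0..1} \<subseteq> disk"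
    proof
      fix z assume "z \<in> g ` {0..1}"
      then obtain s where s: "s \<in> {0..1}" "z = (1 - s) *\<^sub>R x + s *\<^sub>R y"
        by (auto simp: g_def algebra_simps)
      moreover have "convex disk" by (simp add: disk_def)
      ultimately show "z \<in> disk" using x y unfolding convex_def by auto
    qed
    have v: "((f \<circ> g) has_vector_derivative (D (y - x))) (at 0 within cbox 0 1)"
      if D: "(f has_derivative D) (at x within disk)" for D
    proof -
      have "((f \<circ> g) has_derivative (D \<circ> (\<lambda>s. s *\<^sub>R (y - x)))) (at 0 within {0..1})"
        by (rule diff_chain_within[OF g]) (use has_derivative_subset[OF D sub] in \<open>simp add: g_def\<close>)
      moreover have "D \<circ> (\<lambda>s. s *\<^sub>R (y - x)) = (\<lambda>s. s *\<^sub>R D (y - x))"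
        using has_derivative_linear[OF D] by (auto simp: linear_scale)
      ultimately show ?thesis by (simp add: has_vector_derivative_def)
    qed
    show ?thesis
      using vector_derivative_unique_within_closed_interval[of 0 1 0 "f \<circ> g"] v[OF D1] v[OF D2]
      by simp
  qed
  show ?thesis
  proof
    fix h :: complex
    define k where "k = 1 / (1 + norm h)"
    have k: "k > 0" by (simp add: k_def add_pos_nonneg)
    have "norm (k *\<^sub>R h) \<le> 1" unfolding k_def by (auto simp: divide_le_eq_1 add_pos_nonneg)
    then have "D1 (k *\<^sub>R h - x) = D2 (k *\<^sub>R h - x)" "D1 (0 - x) = D2 (0 - x)"
      using on_chords[of "k *\<^sub>R h"] on_chords[of 0] by (auto simp: disk_def)
    then have "D1 (k *\<^sub>R h) = D2 (k *\<^sub>R h)" using lin by (simp add: linear_diff linear_neg)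
    then show "D1 h = D2 h" using k lin by (simp add: linear_scale)
  qed
qed

lemma dpart_eq_derivative:
  "x \<in> disk \<Longrightarrow> (f has_derivative D) (at x within disk) \<Longrightarrow> dpart v f x = D v"
  unfolding dpart_def
  using has_derivative_within_disk_unique frechet_derivative_works differentiableI by metis

lemma has_derivative_within_disk_cong:
  assumes "(f has_derivative D) (at x within disk)" "x \<in> disk" "\<forall>y\<in>disk. f y = g y"
  shows "(g has_derivative D) (at x within disk)"
  by (rule has_derivative_transform_within[of f D x disk 1]) (use assms in auto)

lemma differentiable_within_disk_cong:
  "f differentiable (at x within disk) \<Longrightarrow> x \<in> disk \<Longrightarrow> \<forall>y\<in>disk. f y = g y
   \<Longrightarrow> g differentiable (at x within disk)"
  using has_derivative_within_disk_cong unfolding differentiable_def by blast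

lemma dpart_cong:
  assumes "\<forall>y\<in>disk. f y = g y" "x \<in> disk"
  shows "dpart v f x = dpart v g x"
proof -
  have "(f has_derivative D) (at x within disk) = (g has_derivative D) (at x within disk)" for D
    using has_derivative_within_disk_cong assms by (metis)
  then show ?thesis unfolding dpart_def frechet_derivative_def by simp
qed

lemma dparts_Nil [simp]: "dparts [] f = f"
  by (simp add: dparts_def)

lemma dparts_snoc: "dparts (vs @ [v]) f = dparts vs (dpart v f)"
  by (simp add: dparts_def)

lemma dparts_cong: "\<forall>y\<in>disk. f y = g y \<Longrightarrow> \<forall>x\<in>disk. dparts vs f x = dparts vs g x"
  by (induction vs) (simp_all add: dparts_def dpart_cong)

lemma dpart_real_linear:
  assumes "f differentiable (at x within disk)"
  shows "dpart v f x = of_real (Re v) * dpart 1 f x + of_real (Im v) * dpart \<i> f x"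
proof -
  define D where "D = frechet_derivative f (at x within disk)"
  have D: "linear D"
    using assms frechet_derivative_works has_derivative_linear unfolding D_def by blast
  have v: "v = Re v *\<^sub>R 1 + Im v *\<^sub>R \<i>" by (simp add: complex_eq_iff)
  have "D v = Re v *\<^sub>R D 1 + Im v *\<^sub>R D \<i>"
    by (subst v) (simp add: D linear_add linear_scale)
  then show ?thesis unfolding dpart_def D_def by (simp add: scaleR_conv_of_real)
qed

lemma dpart_compose:
  assumes x: "x \<in> disk" and sub: "g ` disk \<subseteq> disk"
    and f: "f differentiable (at (g x) within disk)" and g: "g differentiable (at x within disk)"
  shows "dpart v (\<lambda>y. f (g y)) x =
     of_real (Re (dpart v g x)) * dpart 1 f (g x) + of_real (Im (dpart v g x)) * dpart \<i> f (g x)"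
proof -
  define Df where "Df = frechet_derivative f (at (g x) within disk)"
  define Dg where "Dg = frechet_derivative g (at x within disk)"
  have hf: "(f has_derivative Df) (at (g x) within disk)"
    and hg: "(g has_derivative Dg) (at x within disk)"
    using f g frechet_derivative_works Df_def Dg_def by blast+
  have "((f \<circ> g) has_derivative (Df \<circ> Dg)) (at x within disk)"
    by (rule diff_chain_within[OF hg has_derivative_subset[OF hf sub]])
  then have "dpart v (\<lambda>y. f (g y)) x = Df (Dg v)"
    using dpart_eq_derivative[OF x] by (simp add: o_def)
  also have "\<dots> = dpart (dpart v g x) f (g x)" by (simp add: dpart_def Df_def Dg_def)
  also have "\<dots> = of_real (Re (dpart v g x)) * dpart 1 f (g x)
      + of_real (Im (dpart v g x)) * dpart \<i> f (g x)"
    by (rule dpart_real_linear[OF f])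
  finally show ?thesis .
qed

lemma dpart_const: "x \<in> disk \<Longrightarrow> dpart v (\<lambda>y. c) x = 0"
  using dpart_eq_derivative[of x "\<lambda>y. c" "\<lambda>h. 0"] by simp

lemma dpart_ident: "x \<in> disk \<Longrightarrow> dpart v (\<lambda>y. y) x = v"
  using dpart_eq_derivative[of x "\<lambda>y. y" "\<lambda>h. h"] by (simp add: has_derivative_ident)

lemma dpart_cnj: "x \<in> disk \<Longrightarrow> dpart v cnj x = cnj v"
  using dpart_eq_derivative[of x cnj cnj] has_derivative_cnj[OF has_derivative_ident] by simp

lemma dpart_bounded_linear:
  assumes "bounded_linear L" "f differentiable (at x within disk)" "x \<in> disk"
  shows "dpart v (\<lambda>y. L (f y)) x = L (dpart v f x)"
proof -
  have "((\<lambda>y. L (f y)) has_derivative (\<lambda>h. L (dpart h f x))) (at x within disk)"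
    using bounded_linear.has_derivative[OF assms(1)] assms(2) frechet_derivative_works
    unfolding dpart_def by blast
  then show ?thesis using dpart_eq_derivative[OF assms(3)] by simp
qed

lemma dpart_add:
  assumes "f differentiable (at x within disk)" "g differentiable (at x within disk)" "x \<in> disk"
  shows "dpart v (\<lambda>y. f y + g y) x = dpart v f x + dpart v g x"
proof -
  have "((\<lambda>y. f y + g y) has_derivative (\<lambda>h. dpart h f x + dpart h g x)) (at x within disk)"
    using has_derivative_add assms(1,2) frechet_derivative_works unfolding dpart_def by blast
  then show ?thesis using dpart_eq_derivative[OF assms(3)] by simp
qed

lemma dpart_mult:
  assumes "f differentiable (at x within disk)" "g differentiable (at x within disk)" "x \<in> disk"
  shows "dpart v (\<lambda>y. f y * g y) x = f x * dpart v g x + dpart v f x * g x"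
proof -
  have "((\<lambda>y. f y * g y) has_derivative (\<lambda>h. f x * dpart h g x + dpart h f x * g x))
      (at x within disk)"
    using has_derivative_mult assms(1,2) frechet_derivative_works unfolding dpart_def by blast
  then show ?thesis using dpart_eq_derivative[OF assms(3)] by simp
qed

lemma dpart_holomorphic_compose:
  assumes h: "h holomorphic_on U" "open U" and f: "f differentiable (at x within disk)"
    and x: "x \<in> disk" and fx: "f x \<in> U"
  shows "dpart v (\<lambda>y. h (f y)) x = deriv h (f x) * dpart v f x"
proof -
  have "(h has_derivative (\<lambda>z. deriv h (f x) * z)) (at (f x) within f ` disk)"
    using holomorphic_derivI[OF h fx] by (simp add: has_field_derivative_imp_has_derivative)
  moreover have "(f has_derivative (\<lambda>h. dpart h f x)) (at x within disk)"
    using f frechet_derivative_works unfolding dpart_def by blast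
  ultimately have "((\<lambda>y. h (f y)) has_derivative (\<lambda>v. deriv h (f x) * dpart v f x))
      (at x within disk)"
    using diff_chain_within[of f _ x disk h] by (simp add: o_def)
  then show ?thesis using dpart_eq_derivative[OF x] by simp
qed

section \<open>Smooth families of maps of the disk\<close>

text \<open>\<open>family_C n\<close> is the finite-order truncation of \<open>smooth_path_in\<close>: a family of maps in
  \<open>Diff_plus\<close> is a smooth path iff it is \<open>family_C n\<close> for every \<open>n\<close>.\<close>

definition family_regular :: "complex list \<Rightarrow> (real \<Rightarrow> complex \<Rightarrow> complex) \<Rightarrow> bool" where
  "family_regular vs F \<longleftrightarrow>
     (\<forall>t\<in>{0..1}. \<forall>x\<in>disk. dparts vs (F t) differentiable (at x within disk)) \<and>
     continuous_on ({0..1} \<times> disk) (\<lambda>(t,x). dparts vs (F t) x)"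

definition family_C :: "nat \<Rightarrow> (real \<Rightarrow> complex \<Rightarrow> complex) \<Rightarrow> bool" where
  "family_C n F \<longleftrightarrow> (\<forall>vs\<in>lists {1, \<i>}. length vs \<le> n \<longrightarrow> family_regular vs F)"

lemma family_regular_snoc: "family_regular (vs @ [v]) F = family_regular vs (\<lambda>t. dpart v (F t))"
  by (simp add: family_regular_def dparts_snoc)

lemma family_C_0_iff: "family_C 0 F \<longleftrightarrow> family_regular [] F"
  unfolding family_C_def by auto

lemma family_C_0:
  "family_C 0 F \<longleftrightarrow> (\<forall>t\<in>{0..1}. \<forall>x\<in>disk. F t differentiable (at x within disk)) \<and>
     continuous_on ({0..1} \<times> disk) (\<lambda>(t,x). F t x)"
  by (simp add: family_C_0_iff family_regular_def)

lemma family_C_mono: "family_C n F \<Longrightarrow> m \<le> n \<Longrightarrow> family_C m F"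
  unfolding family_C_def by auto

lemma family_C_Suc:
  "family_C (Suc n) F \<longleftrightarrow>
     family_C 0 F \<and> (\<forall>v\<in>{1, \<i>}. family_C n (\<lambda>t. dpart v (F t)))"
proof
  assume F: "family_C (Suc n) F"
  have "family_C n (\<lambda>t. dpart v (F t))" if "v \<in> {1, \<i>}" for v
    unfolding family_C_def
  proof (intro ballI impI)
    fix vs :: "complex list" assume "vs \<in> lists {1, \<i>}" "length vs \<le> n"
    then have "family_regular (vs @ [v]) F" using F that unfolding family_C_def by simp
    then show "family_regular vs (\<lambda>t. dpart v (F t))" by (simp add: family_regular_snoc)
  qed
  then show "family_C 0 F \<and> (\<forall>v\<in>{1, \<i>}. family_C n (\<lambda>t. dpart v (F t)))"
    using family_C_mono[OF F] by blast
next
  assume F: "family_C 0 F \<and> (\<forall>v\<in>{1, \<i>}. family_C n (\<lambda>t. dpart v (F t)))"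
  show "family_C (Suc n) F" unfolding family_C_def
  proof (intro ballI impI)
    fix vs :: "complex list" assume vs: "vs \<in> lists {1, \<i>}" "length vs \<le> Suc n"
    show "family_regular vs F"
    proof (cases vs rule: rev_cases)
      case Nil then show ?thesis using F by (simp add: family_C_0_iff)
    next
      case (snoc ws v)
      then have "family_C n (\<lambda>t. dpart v (F t))" "ws \<in> lists {1, \<i>}" "length ws \<le> n"
        using F vs by auto
      then show ?thesis unfolding snoc family_regular_snoc family_C_def by blast
    qed
  qed
qed

lemma family_C_SucI:
  "family_C 0 F \<Longrightarrow> (\<And>v. v \<in> {1, \<i>} \<Longrightarrow> family_C n (\<lambda>t. dpart v (F t))) \<Longrightarrow> family_C (Suc n) F"
  using family_C_Suc by auto

lemma family_C_SucD: "family_C (Suc n) F \<Longrightarrow> v \<in> {1, \<i>} \<Longrightarrow> family_C n (\<lambda>t. dpart v (F t))"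
  using family_C_Suc by auto

lemma family_C_differentiable:
  "family_C n F \<Longrightarrow> t \<in> {0..1} \<Longrightarrow> x \<in> disk \<Longrightarrow> F t differentiable (at x within disk)"
  using family_C_mono[of n F 0] by (simp add: family_C_0)

lemma family_C_continuous: "family_C n F \<Longrightarrow> continuous_on ({0..1} \<times> disk) (\<lambda>(t,x). F t x)"
  using family_C_mono[of n F 0] by (simp add: family_C_0)

lemma family_C_cong:
  assumes F: "family_C n F" and FG: "\<forall>t\<in>{0..1}. \<forall>x\<in>disk. F t x = G t x"
  shows "family_C n G"
  unfolding family_C_def
proof (intro ballI impI)
  fix vs :: "complex list" assume "vs \<in> lists {1, \<i>}" "length vs \<le> n"
  then have reg: "family_regular vs F" using F unfolding family_C_def by blast
  have eq: "\<forall>t\<in>{0..1}. \<forall>x\<in>disk. dparts vs (F t) x = dparts vs (G t) x"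
    using FG dparts_cong by blast
  have "continuous_on ({0..1} \<times> disk) (\<lambda>(t,x). dparts vs (G t) x)"
    using reg unfolding family_regular_def by (rule continuous_on_eq[OF conjunct2]) (use eq in auto)
  then show "family_regular vs G"
    using reg eq differentiable_within_disk_cong unfolding family_regular_def by blast
qed

lemma continuous_on_family_compose:
  assumes F: "continuous_on ({0..1} \<times> disk) (\<lambda>(t,x). F t x)"
    and a: "continuous_on A a" and b: "continuous_on A b"
    and ab: "\<forall>p\<in>A. a p \<in> {0..1} \<and> b p \<in> disk"
  shows "continuous_on A (\<lambda>p. F (a p) (b p))"
proof -
  have "continuous_on A (\<lambda>p. (a p, b p))" using a b by (intro continuous_intros)
  moreover have "(\<lambda>p. (a p, b p)) ` A \<subseteq> {0..1} \<times> disk" using ab by auto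
  ultimately have "continuous_on A (\<lambda>p. F (fst (a p, b p)) (snd (a p, b p)))"
    by (rule continuous_on_compose2[OF F[unfolded case_prod_beta']])
  then show ?thesis by simp
qed

lemma family_C_const: "family_C n (\<lambda>t x. c)"
proof (induction n arbitrary: c)
  case 0 then show ?case by (simp add: family_C_0 case_prod_beta')
next
  case (Suc n)
  show ?case
  proof (rule family_C_SucI)
    show "family_C 0 (\<lambda>t x. c)" by (simp add: family_C_0 case_prod_beta')
    show "family_C n (\<lambda>t. dpart v (\<lambda>x. c))" for v
      by (rule family_C_cong[OF Suc.IH[of 0]]) (simp add: dpart_const)
  qed
qed

lemma family_C_ident: "family_C n (\<lambda>t x. x)"
proof (cases n)
  case 0
  then show ?thesis by (simp add: family_C_0 case_prod_beta' continuous_on_snd)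
next
  case (Suc m)
  show ?thesis unfolding Suc
  proof (rule family_C_SucI)
    show "family_C 0 (\<lambda>t x. x)" by (simp add: family_C_0 case_prod_beta' continuous_on_snd)
    show "family_C m (\<lambda>t. dpart v (\<lambda>x. x))" for v
      by (rule family_C_cong[OF family_C_const[of m v]]) (simp add: dpart_ident)
  qed
qed

lemma family_C_bounded_linear:
  "bounded_linear L \<Longrightarrow> family_C n F \<Longrightarrow> family_C n (\<lambda>t x. L (F t x))"
proof (induction n arbitrary: F)
  case 0
  have "continuous_on ({0..1} \<times> disk) (\<lambda>p. L (F (fst p) (snd p)))"
    using family_C_continuous[OF 0(2)] bounded_linear.continuous_on[OF 0(1)]
    by (simp add: case_prod_beta')
  moreover have "(\<lambda>x. L (F t x)) differentiable (at x within disk)"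
    if "t \<in> {0..1}" "x \<in> disk" for t x
    using bounded_linear.has_derivative[OF 0(1)] family_C_differentiable[OF 0(2) that]
    unfolding differentiable_def by blast
  ultimately show ?case by (simp add: family_C_0 case_prod_beta')
next
  case (Suc n)
  show ?case
  proof (rule family_C_SucI)
    show "family_C 0 (\<lambda>t x. L (F t x))"
      using Suc.IH[OF Suc.prems(1) family_C_mono[OF Suc.prems(2)]] family_C_mono by fastforce
    fix v :: complex assume v: "v \<in> {1, \<i>}"
    have "family_C n (\<lambda>t x. L (dpart v (F t) x))"
      using Suc.IH[OF Suc.prems(1) family_C_SucD[OF Suc.prems(2) v]] .
    then show "family_C n (\<lambda>t. dpart v (\<lambda>x. L (F t x)))"
      by (rule family_C_cong)
        (simp add: dpart_bounded_linear[OF Suc.prems(1) family_C_differentiable[OF Suc.prems(2)]])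
  qed
qed

lemma family_C_add: "family_C n F \<Longrightarrow> family_C n G \<Longrightarrow> family_C n (\<lambda>t x. F t x + G t x)"
proof (induction n arbitrary: F G)
  case 0
  have "continuous_on ({0..1} \<times> disk) (\<lambda>p. F (fst p) (snd p) + G (fst p) (snd p))"
    using family_C_continuous[OF 0(1)] family_C_continuous[OF 0(2)]
    by (intro continuous_on_add) (simp_all add: case_prod_beta')
  moreover have "(\<lambda>x. F t x + G t x) differentiable (at x within disk)"
    if "t \<in> {0..1}" "x \<in> disk" for t x
    using family_C_differentiable[OF 0(1) that] family_C_differentiable[OF 0(2) that] by simp
  ultimately show ?case by (simp add: family_C_0 case_prod_beta')
next
  case (Suc n)
  show ?case
  proof (rule family_C_SucI)
    show "family_C 0 (\<lambda>t x. F t x + G t x)"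
      using Suc.IH[OF family_C_mono[OF Suc.prems(1)] family_C_mono[OF Suc.prems(2)]] family_C_mono
      by fastforce
    fix v :: complex assume v: "v \<in> {1, \<i>}"
    have "family_C n (\<lambda>t x. dpart v (F t) x + dpart v (G t) x)"
      using Suc.IH[OF family_C_SucD[OF Suc.prems(1) v] family_C_SucD[OF Suc.prems(2) v]] .
    then show "family_C n (\<lambda>t. dpart v (\<lambda>x. F t x + G t x))"
      by (rule family_C_cong) (simp add: dpart_add family_C_differentiable[OF Suc.prems(1)]
          family_C_differentiable[OF Suc.prems(2)])
  qed
qed

lemma family_C_mult: "family_C n F \<Longrightarrow> family_C n G \<Longrightarrow> family_C n (\<lambda>t x. F t x * G t x)"
proof (induction n arbitrary: F G)
  case 0
  have "continuous_on ({0..1} \<times> disk) (\<lambda>p. F (fst p) (snd p) * G (fst p) (snd p))"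
    using family_C_continuous[OF 0(1)] family_C_continuous[OF 0(2)]
    by (intro continuous_on_mult) (simp_all add: case_prod_beta')
  moreover have "(\<lambda>x. F t x * G t x) differentiable (at x within disk)"
    if "t \<in> {0..1}" "x \<in> disk" for t x
    using family_C_differentiable[OF 0(1) that] family_C_differentiable[OF 0(2) that] by simp
  ultimately show ?case by (simp add: family_C_0 case_prod_beta')
next
  case (Suc n)
  have F: "family_C n F" and G: "family_C n G" using Suc.prems family_C_mono by auto
  show ?case
  proof (rule family_C_SucI)
    show "family_C 0 (\<lambda>t x. F t x * G t x)" using Suc.IH[OF F G] family_C_mono by fastforce
    fix v :: complex assume v: "v \<in> {1, \<i>}"
    have "family_C n (\<lambda>t x. F t x * dpart v (G t) x + dpart v (F t) x * G t x)"
      using family_C_add[OF Suc.IH[OF F family_C_SucD[OF Suc.prems(2) v]]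
          Suc.IH[OF family_C_SucD[OF Suc.prems(1) v] G]] .
    then show "family_C n (\<lambda>t. dpart v (\<lambda>x. F t x * G t x))"
      by (rule family_C_cong) (simp add: dpart_mult family_C_differentiable[OF Suc.prems(1)]
          family_C_differentiable[OF Suc.prems(2)])
  qed
qed

lemma family_C_holomorphic_compose:
  "h holomorphic_on U \<Longrightarrow> open U \<Longrightarrow> family_C n G \<Longrightarrow> \<forall>t\<in>{0..1}. \<forall>x\<in>disk. G t x \<in> U
   \<Longrightarrow> family_C n (\<lambda>t x. h (G t x))"
proof (induction n arbitrary: h)
  case 0
  have "continuous_on ({0..1} \<times> disk) (\<lambda>p. G (fst p) (snd p))"
    using family_C_continuous[OF 0(3)] by (simp add: case_prod_beta')
  moreover have "(\<lambda>p. G (fst p) (snd p)) ` ({0..1} \<times> disk) \<subseteq> U" using 0(4) by auto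
  ultimately have "continuous_on ({0..1} \<times> disk) (\<lambda>p. h (G (fst p) (snd p)))"
    by (rule continuous_on_compose2[OF holomorphic_on_imp_continuous_on[OF 0(1)]])
  moreover have "(\<lambda>x. h (G t x)) differentiable (at x within disk)"
    if tx: "t \<in> {0..1}" "x \<in> disk" for t x
  proof -
    have "(h has_field_derivative deriv h (G t x)) (at (G t x) within G t ` disk)"
      using holomorphic_derivI[OF 0(1,2)] 0(4) tx by blast
    then have "h differentiable (at (G t x) within G t ` disk)"
      using has_field_derivative_imp_has_derivative differentiableI by blast
    from differentiable_chain_within[OF family_C_differentiable[OF 0(3) tx] this]
    show ?thesis by (simp add: o_def)
  qed
  ultimately show ?case by (simp add: family_C_0 case_prod_beta')
next
  case (Suc n)
  have G: "family_C n G" using Suc.prems family_C_mono by auto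
  show ?case
  proof (rule family_C_SucI)
    show "family_C 0 (\<lambda>t x. h (G t x))"
      using Suc.IH[OF Suc.prems(1,2) G Suc.prems(4)] family_C_mono by fastforce
    fix v :: complex assume v: "v \<in> {1, \<i>}"
    have "deriv h holomorphic_on U" using holomorphic_deriv Suc.prems(1,2) by blast
    then have "family_C n (\<lambda>t x. deriv h (G t x) * dpart v (G t) x)"
      using family_C_mult[OF Suc.IH[OF _ Suc.prems(2) G Suc.prems(4)]
          family_C_SucD[OF Suc.prems(3) v]] by blast
    then show "family_C n (\<lambda>t. dpart v (\<lambda>x. h (G t x)))"
      by (rule family_C_cong) (simp add: Suc.prems(4)
          dpart_holomorphic_compose[OF Suc.prems(1,2) family_C_differentiable[OF Suc.prems(3)]])
  qed
qed

lemma family_C_compose: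
  "family_C n F \<Longrightarrow> family_C n K \<Longrightarrow> \<forall>t\<in>{0..1}. \<forall>x\<in>disk. K t x \<in> disk
   \<Longrightarrow> family_C n (\<lambda>t x. F t (K t x))"
proof (induction n arbitrary: F)
  case 0
  have "continuous_on ({0..1} \<times> disk) (\<lambda>p. F (fst p) (K (fst p) (snd p)))"
    using family_C_continuous[OF 0(2)] 0(3)
    by (intro continuous_on_family_compose[OF family_C_continuous[OF 0(1)]])
      (auto simp: case_prod_beta' continuous_on_fst)
  moreover have "(\<lambda>x. F t (K t x)) differentiable (at x within disk)"
    if tx: "t \<in> {0..1}" "x \<in> disk" for t x
  proof -
    have "K t ` disk \<subseteq> disk" using 0(3) tx by auto
    then have "F t differentiable (at (K t x) within K t ` disk)"
      using differentiable_within_subset family_C_differentiable[OF 0(1) tx(1)] 0(3) tx by blast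
    from differentiable_chain_within[OF family_C_differentiable[OF 0(2) tx] this]
    show ?thesis by (simp add: o_def)
  qed
  ultimately show ?case by (simp add: family_C_0 case_prod_beta')
next
  case (Suc n)
  have K: "family_C n K" using Suc.prems family_C_mono by auto
  show ?case
  proof (rule family_C_SucI)
    show "family_C 0 (\<lambda>t x. F t (K t x))"
      using Suc.IH[OF family_C_mono[OF Suc.prems(1)] K Suc.prems(3)] family_C_mono by fastforce
    fix v :: complex assume v: "v \<in> {1, \<i>}"
    have Re: "bounded_linear (\<lambda>z::complex. complex_of_real (Re z))"
      and Im: "bounded_linear (\<lambda>z::complex. complex_of_real (Im z))"
      by (auto intro: bounded_linear_compose[OF bounded_linear_of_real]
          bounded_linear_Re bounded_linear_Im)
    have "family_C n (\<lambda>t x. complex_of_real (Re (dpart v (K t) x)) * dpart 1 (F t) (K t x) +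
                     complex_of_real (Im (dpart v (K t) x)) * dpart \<i> (F t) (K t x))"
      using family_C_add[OF family_C_mult family_C_mult,
          OF family_C_bounded_linear[OF Re] _ family_C_bounded_linear[OF Im],
          OF family_C_SucD[OF Suc.prems(2) v] _ family_C_SucD[OF Suc.prems(2) v]]
        Suc.IH[OF family_C_SucD[OF Suc.prems(1)] K Suc.prems(3)] by simp
    then show "family_C n (\<lambda>t. dpart v (\<lambda>x. F t (K t x)))"
    proof (rule family_C_cong, intro ballI)
      fix t :: real and x assume tx: "t \<in> {0..1}" "x \<in> disk"
      then have "K t ` disk \<subseteq> disk" using Suc.prems(3) by auto
      then show "complex_of_real (Re (dpart v (K t) x)) * dpart 1 (F t) (K t x) +
          complex_of_real (Im (dpart v (K t) x)) * dpart \<i> (F t) (K t x)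
          = dpart v (\<lambda>x. F t (K t x)) x"
        using dpart_compose[OF tx(2) _ family_C_differentiable[OF Suc.prems(1) tx(1)]
            family_C_differentiable[OF Suc.prems(2) tx]] tx by auto
    qed
  qed
qed

lemma family_C_smooth_disk:
  assumes "smooth_disk f"
  shows "family_C n (\<lambda>t. f)"
proof -
  have "family_regular vs (\<lambda>t. f)" if "vs \<in> lists {1, \<i>}" for vs
  proof -
    have d: "\<forall>x\<in>disk. dparts vs f differentiable (at x within disk)"
      using assms that unfolding smooth_disk_def by blast
    then have "continuous_on disk (dparts vs f)"
      using differentiable_imp_continuous_within continuous_on_eq_continuous_within by blast
    then have "continuous_on ({0..1::real} \<times> disk) (\<lambda>p. dparts vs f (snd p))"
      by (rule continuous_on_compose2) (auto intro: continuous_intros)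
    then show ?thesis using d unfolding family_regular_def by (simp add: case_prod_beta')
  qed
  then show ?thesis unfolding family_C_def by blast
qed

lemma smooth_diskI_family_C: "(\<And>n. family_C n (\<lambda>t. f)) \<Longrightarrow> smooth_disk f"
  unfolding smooth_disk_def family_C_def family_regular_def
  by (metis atLeastAtMost_iff order_refl zero_le_one)

lemma smooth_disk_cong: "smooth_disk f \<Longrightarrow> \<forall>x\<in>disk. f x = g x \<Longrightarrow> smooth_disk g"
  by (metis family_C_smooth_disk family_C_cong smooth_diskI_family_C)

lemma smooth_disk_compose:
  "smooth_disk f \<Longrightarrow> smooth_disk g \<Longrightarrow> \<forall>x\<in>disk. g x \<in> disk \<Longrightarrow> smooth_disk (\<lambda>x. f (g x))"
  by (rule smooth_diskI_family_C, rule family_C_compose[OF family_C_smooth_disk family_C_smooth_disk])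
    auto

lemma smooth_disk_differentiable:
  "smooth_disk f \<Longrightarrow> x \<in> disk \<Longrightarrow> f differentiable (at x within disk)"
  unfolding smooth_disk_def by (metis dparts_Nil lists.Nil)

lemma smooth_disk_ident: "smooth_disk (\<lambda>x. x)"
  by (rule smooth_diskI_family_C) (rule family_C_ident)

lemma smooth_disk_holomorphic: "h holomorphic_on U \<Longrightarrow> open U \<Longrightarrow> disk \<subseteq> U \<Longrightarrow> smooth_disk h"
  by (rule smooth_diskI_family_C, rule family_C_holomorphic_compose[OF _ _ family_C_ident]) auto

lemma dpart_holomorphic:
  assumes "h holomorphic_on U" "open U" "disk \<subseteq> U" "x \<in> disk"
  shows "dpart v h x = deriv h x * v"
  using dpart_holomorphic_compose[OF assms(1,2), of "\<lambda>y. y" x v] assms(3,4)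
  by (auto simp: dpart_ident)

section \<open>Jacobians and diffeomorphisms of the disk\<close>

lemma jac_det_compose:
  assumes "x \<in> disk" "g ` disk \<subseteq> disk"
    and "f differentiable (at (g x) within disk)" "g differentiable (at x within disk)"
  shows "jac_det (\<lambda>y. f (g y)) x = jac_det f (g x) * jac_det g x"
  unfolding jac_det_def dpart_compose[OF assms] by (simp add: algebra_simps)

lemma jac_det_ident_on_disk: "x \<in> disk \<Longrightarrow> \<forall>y\<in>disk. f y = y \<Longrightarrow> jac_det f x = 1"
  unfolding jac_det_def using dpart_cong[of f "\<lambda>y. y" x] dpart_ident by simp

lemma jac_det_holomorphic:
  assumes "h holomorphic_on U" "open U" "disk \<subseteq> U" "x \<in> disk"
  shows "jac_det h x = (cmod (deriv h x))\<^sup>2"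
  unfolding jac_det_def dpart_holomorphic[OF assms] cmod_power2
  by (simp add: power2_eq_square algebra_simps)

lemma jac_det_inverse:
  assumes "smooth_disk f" "smooth_disk g" "\<forall>x\<in>disk. g x \<in> disk \<and> f (g x) = x" "x \<in> disk"
  shows "jac_det f (g x) * jac_det g x = 1"
  using jac_det_compose[OF assms(4) _ smooth_disk_differentiable[OF assms(1)]
      smooth_disk_differentiable[OF assms(2,4)]] jac_det_ident_on_disk[OF assms(4)] assms(3,4)
  by auto

text \<open>Unlike
  \<open>Diff_plus\<close>, this names the inverse, which makes compositions and inverses explicit.\<close>

definition diffeo_pair :: "(complex \<Rightarrow> complex) \<Rightarrow> (complex \<Rightarrow> complex) \<Rightarrow> bool" where
  "diffeo_pair f g \<longleftrightarrow> (\<forall>x\<in>disk. f x \<in> disk \<and> g x \<in> disk \<and> g (f x) = x \<and> f (g x) = x) \<and>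
     smooth_disk f \<and> smooth_disk g \<and> (\<forall>x\<in>disk. jac_det f x > 0) \<and> (\<forall>x\<in>disk. jac_det g x > 0)"

lemma diffeo_pair_sym: "diffeo_pair f g \<Longrightarrow> diffeo_pair g f"
  unfolding diffeo_pair_def by auto

lemma diffeo_pair_inj: "diffeo_pair f g \<Longrightarrow> x \<in> disk \<Longrightarrow> y \<in> disk \<Longrightarrow> f x = f y \<Longrightarrow> x = y"
  unfolding diffeo_pair_def by metis

lemma diffeo_pair_ident: "diffeo_pair (\<lambda>x. x) (\<lambda>x. x)"
  unfolding diffeo_pair_def using smooth_disk_ident jac_det_ident_on_disk by auto

lemma diffeo_pair_compose:
  assumes fg: "diffeo_pair f g" and fg': "diffeo_pair f' g'"
  shows "diffeo_pair (\<lambda>x. f (f' x)) (\<lambda>x. g' (g x))"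
proof -
  have maps: "\<forall>x\<in>disk. f x \<in> disk" "\<forall>x\<in>disk. g x \<in> disk"
    "\<forall>x\<in>disk. f' x \<in> disk" "\<forall>x\<in>disk. g' x \<in> disk"
    and smooth: "smooth_disk f" "smooth_disk g" "smooth_disk f'" "smooth_disk g'"
    using assms unfolding diffeo_pair_def by auto
  have sub: "f' ` disk \<subseteq> disk" "g ` disk \<subseteq> disk" using maps by auto
  have "jac_det (\<lambda>x. f (f' x)) x > 0" "jac_det (\<lambda>x. g' (g x)) x > 0" if x: "x \<in> disk" for x
    using jac_det_compose[OF x sub(1) smooth_disk_differentiable[OF smooth(1)]
        smooth_disk_differentiable[OF smooth(3) x]]
      jac_det_compose[OF x sub(2) smooth_disk_differentiable[OF smooth(4)]
        smooth_disk_differentiable[OF smooth(2) x]] maps x assms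
    unfolding diffeo_pair_def by auto
  then show ?thesis
    using assms smooth_disk_compose[OF smooth(1,3) maps(3)]
      smooth_disk_compose[OF smooth(4,2) maps(2)]
    unfolding diffeo_pair_def by auto
qed

lemma diffeo_pair_Diff_plus: "diffeo_pair f g \<Longrightarrow> f \<in> Diff_plus"
proof -
  assume fg: "diffeo_pair f g"
  then have image: "f ` disk = disk" unfolding diffeo_pair_def by (auto intro: rev_image_eqI)
  have inj: "inj_on f disk" using fg unfolding diffeo_pair_def by (metis inj_onI)
  have "\<forall>y\<in>disk. g y = inv_into disk f y"
    using fg inv_into_f_f[OF inj] unfolding diffeo_pair_def by metis
  then have "smooth_disk (inv_into disk f)"
    using smooth_disk_cong fg unfolding diffeo_pair_def by blast
  then show ?thesis using fg image inj unfolding diffeo_pair_def Diff_plus_def by auto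
qed

lemma Diff_plus_diffeo_pair: "T \<in> Diff_plus \<Longrightarrow> diffeo_pair T (inv_into disk T)"
proof -
  assume "T \<in> Diff_plus"
  then have image: "T ` disk = disk" and inj: "inj_on T disk"
    and smooth: "smooth_disk T" "smooth_disk (inv_into disk T)"
    and jac: "\<forall>x\<in>disk. jac_det T x > 0"
    unfolding Diff_plus_def by auto
  define S where "S = inv_into disk T"
  have S: "\<forall>x\<in>disk. S x \<in> disk" "\<forall>x\<in>disk. T (S x) = x" "\<forall>x\<in>disk. S (T x) = x"
    using image inv_into_into[of _ T disk] f_inv_into_f[of _ T disk] inv_into_f_f[OF inj]
    unfolding S_def by auto
  have "jac_det S x > 0" if x: "x \<in> disk" for x
  proof -
    have "jac_det T (S x) * jac_det S x = 1"
      by (rule jac_det_inverse[OF smooth[folded S_def]]) (use S x in auto)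
    moreover have "jac_det T (S x) > 0" using jac S x by blast
    ultimately show ?thesis by (metis zero_less_mult_pos zero_less_one)
  qed
  then show ?thesis
    unfolding diffeo_pair_def S_def[symmetric] using S image smooth[folded S_def] jac by auto
qed

lemma Diff_plus_compose: "a \<in> Diff_plus \<Longrightarrow> b \<in> Diff_plus \<Longrightarrow> (\<lambda>x. a (b x)) \<in> Diff_plus"
  using diffeo_pair_Diff_plus diffeo_pair_compose Diff_plus_diffeo_pair by blast

text \<open>For holomorphic maps the Jacobian is \<open>|h'|\<^sup>2 \<ge> 0\<close>, and it cannot vanish since
  \<open>jac_det h (k y) * jac_det k y = 1\<close>.\<close>

lemma diffeo_pair_holomorphic:
  assumes h: "h holomorphic_on U" "open U" "disk \<subseteq> U"
    and k: "k holomorphic_on V" "open V" "disk \<subseteq> V"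
    and inv: "\<forall>x\<in>disk. h x \<in> disk \<and> k x \<in> disk \<and> k (h x) = x \<and> h (k x) = x"
  shows "diffeo_pair h k"
proof -
  have smooth: "smooth_disk h" "smooth_disk k"
    using smooth_disk_holomorphic h k by blast+
  have "jac_det h x > 0" if x: "x \<in> disk" for x
  proof -
    have "jac_det h (k (h x)) * jac_det k (h x) = 1"
      by (rule jac_det_inverse[OF smooth]) (use inv x in auto)
    then have "jac_det h x \<noteq> 0" using inv x by auto
    then show ?thesis using jac_det_holomorphic[OF h x] by simp
  qed
  moreover have "jac_det k x > 0" if x: "x \<in> disk" for x
  proof -
    have "jac_det k (h (k x)) * jac_det h (k x) = 1"
      by (rule jac_det_inverse[OF smooth(2,1)]) (use inv x in auto)
    then have "jac_det k x \<noteq> 0" using inv x by auto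
    then show ?thesis using jac_det_holomorphic[OF k x] by simp
  qed
  ultimately show ?thesis unfolding diffeo_pair_def using inv smooth by auto
qed

section \<open>Path components and the group structure\<close>

lemma smooth_path_in_family_C: "smooth_path_in S H \<Longrightarrow> S \<subseteq> Diff_plus \<Longrightarrow> family_C n H"
  unfolding family_C_def family_regular_def smooth_path_in_def smooth_disk_def Diff_plus_def
  by blast

lemma smooth_path_inI: "\<forall>t\<in>{0..1}. H t \<in> S \<Longrightarrow> (\<And>n. family_C n H) \<Longrightarrow> smooth_path_in S H"
  unfolding smooth_path_in_def family_C_def family_regular_def by blast

lemma smooth_path_in_const: "T \<in> S \<Longrightarrow> S \<subseteq> Diff_plus \<Longrightarrow> smooth_path_in S (\<lambda>t. T)"
  by (rule smooth_path_inI) (auto simp: Diff_plus_def intro: family_C_smooth_disk)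

lemma continuous_on_path_join:
  fixes A B :: "real \<Rightarrow> complex \<Rightarrow> complex"
  assumes A: "continuous_on ({0..1} \<times> disk) (\<lambda>(t,x). A t x)"
    and B: "continuous_on ({0..1} \<times> disk) (\<lambda>(t,x). B t x)"
    and AB: "\<forall>x\<in>disk. A 1 x = B 0 x"
  shows "continuous_on ({0..1} \<times> disk) (\<lambda>(t,x). if t \<le> 1/2 then A (2 * t) x else B (2 * t - 1) x)"
    (is "continuous_on _ ?J")
proof -
  let ?L = "{0..1/2::real} \<times> disk" and ?R = "{1/2..1::real} \<times> disk"
  have L: "continuous_on ?L (\<lambda>p. 2 * fst p)" "continuous_on ?L snd"
    and R: "continuous_on ?R (\<lambda>p. 2 * fst p - 1)" "continuous_on ?R snd"
    by (intro continuous_intros)+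
  have "continuous_on ?L (\<lambda>p. A (2 * fst p) (snd p))"
    by (rule continuous_on_family_compose[OF A L]) auto
  then have left: "continuous_on ?L ?J"
    by (rule continuous_on_eq) auto
  have "continuous_on ?R (\<lambda>p. B (2 * fst p - 1) (snd p))"
    by (rule continuous_on_family_compose[OF B R]) auto
  then have right: "continuous_on ?R ?J"
  proof (rule continuous_on_eq)
    fix p assume "p \<in> ?R"
    then obtain t x where "p = (t, x)" "1/2 \<le> t" "x \<in> disk" by auto
    then show "B (2 * fst p - 1) (snd p) = ?J p" using AB by (cases "t = 1/2") auto
  qed
  have "closed ?L" "closed ?R" by (simp_all add: closed_Times disk_def)
  from continuous_on_closed_Un[OF this left right]
  show ?thesis by (simp add: Sigma_Un_distrib1[symmetric] ivl_disj_un_two_touch)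
qed

lemma family_C_reparam:
  assumes "family_C n H" "continuous_on {0..1} \<phi>" "\<phi> ` {0..1} \<subseteq> {0..1}"
  shows "family_C n (\<lambda>t. H (\<phi> t))"
  unfolding family_C_def
proof (intro ballI impI)
  fix vs assume "vs \<in> lists {1, \<i>}" "length vs \<le> n"
  then have H: "family_regular vs H" using assms(1) unfolding family_C_def by blast
  have snd: "continuous_on ({0..1::real} \<times> disk) snd" by (intro continuous_intros)
  have \<phi>: "continuous_on ({0..1} \<times> disk) (\<lambda>p. \<phi> (fst p))"
    by (rule continuous_on_compose2[OF assms(2)]) (auto intro: continuous_intros)
  have "continuous_on ({0..1} \<times> disk) (\<lambda>(t,x). dparts vs (H t) x)"
    using H unfolding family_regular_def by blast
  moreover have "\<forall>p\<in>{0..1} \<times> disk. \<phi> (fst p) \<in> {0..1} \<and> snd p \<in> disk" using assms(3) by auto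
  ultimately have "continuous_on ({0..1} \<times> disk) (\<lambda>p. dparts vs (H (\<phi> (fst p))) (snd p))"
    using continuous_on_family_compose[OF _ \<phi> snd] by blast
  moreover have "\<forall>t\<in>{0..1}. \<forall>x\<in>disk. dparts vs (H (\<phi> t)) differentiable (at x within disk)"
    using H assms(3) unfolding family_regular_def image_subset_iff by blast
  ultimately show "family_regular vs (\<lambda>t. H (\<phi> t))"
    unfolding family_regular_def case_prod_beta' by blast
qed

lemma pc_rel_refl: "T \<in> S \<Longrightarrow> S \<subseteq> Diff_plus \<Longrightarrow> (T, T) \<in> pc_rel S"
  unfolding pc_rel_def using smooth_path_in_const by fastforce

lemma pc_rel_sym:
  assumes "(T, T') \<in> pc_rel S" "S \<subseteq> Diff_plus"
  shows "(T', T) \<in> pc_rel S"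
proof -
  obtain H where H: "smooth_path_in S H" "\<forall>x\<in>disk. H 0 x = T x" "\<forall>x\<in>disk. H 1 x = T' x"
    and TT': "T \<in> S" "T' \<in> S" using assms(1) unfolding pc_rel_def by blast
  have "family_C n (\<lambda>t. H (1 - t))" for n
    by (rule family_C_reparam[OF smooth_path_in_family_C[OF H(1) assms(2)]])
      (auto intro: continuous_intros)
  moreover have "\<forall>t\<in>{0..1}. H (1 - t) \<in> S" using H(1) unfolding smooth_path_in_def by auto
  ultimately have "smooth_path_in S (\<lambda>t. H (1 - t))" by (blast intro: smooth_path_inI)
  then show ?thesis using H TT' unfolding pc_rel_def by auto
qed

lemma pc_rel_trans:
  assumes "(T, T') \<in> pc_rel S" "(T', T'') \<in> pc_rel S" "S \<subseteq> Diff_plus"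
  shows "(T, T'') \<in> pc_rel S"
proof -
  obtain H where H: "smooth_path_in S H" "\<forall>x\<in>disk. H 0 x = T x" "\<forall>x\<in>disk. H 1 x = T' x"
    and TT': "T \<in> S" "T' \<in> S" using assms(1) unfolding pc_rel_def by auto
  obtain K where K: "smooth_path_in S K" "\<forall>x\<in>disk. K 0 x = T' x" "\<forall>x\<in>disk. K 1 x = T'' x"
    and T'': "T'' \<in> S" using assms(2) unfolding pc_rel_def by auto
  define L where "L = (\<lambda>t::real. if t \<le> 1/2 then H (2 * t) else K (2 * t - 1))"
  have LS: "\<forall>t\<in>{0..1}. L t \<in> S"
    using H(1) K(1) unfolding L_def smooth_path_in_def by auto
  have "family_regular vs L" if vs: "vs \<in> lists {1, \<i>}" for vs
  proof -
    have "continuous_on ({0..1} \<times> disk)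
        (\<lambda>(t,x). if t \<le> 1/2 then dparts vs (H (2 * t)) x else dparts vs (K (2 * t - 1)) x)"
      using H(1) K(1) vs dparts_cong[of "H 1" "K 0" vs] H(3) K(2)
      by (intro continuous_on_path_join) (auto simp: smooth_path_in_def)
    then have "continuous_on ({0..1} \<times> disk) (\<lambda>(t,x). dparts vs (L t) x)"
      by (simp add: L_def if_distrib[of "\<lambda>f. dparts vs f"] if_distrib[of "\<lambda>f. f _"])
    moreover have "L t \<in> Diff_plus" if "t \<in> {0..1}" for t using LS assms(3) that by auto
    ultimately show ?thesis
      using vs unfolding family_regular_def Diff_plus_def smooth_disk_def by blast
  qed
  then have "smooth_path_in S L" using LS by (auto intro: smooth_path_inI simp: family_C_def)
  then show ?thesis using H(2) K(3) TT' T'' unfolding pc_rel_def by (auto simp: L_def)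
qed

lemma equiv_pc_rel: "S \<subseteq> Diff_plus \<Longrightarrow> equiv S (pc_rel S)"
proof (rule equivI)
  assume S: "S \<subseteq> Diff_plus"
  show "pc_rel S \<subseteq> S \<times> S" unfolding pc_rel_def by blast
  show "refl_on S (pc_rel S)"
    unfolding refl_on_def using pc_rel_refl[OF _ S] by (auto simp: pc_rel_def)
  show "sym (pc_rel S)" by (rule symI) (rule pc_rel_sym[OF _ S])
  show "trans (pc_rel S)" by (rule transI) (rule pc_rel_trans[OF _ _ S])
qed

lemma half_set_subset_Diff_plus: "half_set P \<subseteq> Diff_plus"
  unfolding half_set_def by blast

lemma id_half_set: "id \<in> half_set P"
  using diffeo_pair_Diff_plus[OF diffeo_pair_ident] by (simp add: half_set_def id_def)

lemma half_set_compose: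
  assumes a: "a \<in> half_set P" and b: "b \<in> half_set P"
  shows "a \<circ> b \<in> half_set P"
proof -
  have "(\<lambda>x. a (b x)) \<in> Diff_plus"
    by (rule Diff_plus_compose) (use a b in \<open>simp_all add: half_set_def\<close>)
  moreover have "(a \<circ> b) ` P = a ` (b ` P)" by (simp add: image_comp)
  then have "(a \<circ> b) ` P = P" using a b unfolding half_set_def by simp
  moreover have "(\<forall>x\<in>circle. a x = half_rot x) \<or> (\<forall>x\<in>circle. a x = x)"
    and "(\<forall>x\<in>circle. b x = half_rot x) \<or> (\<forall>x\<in>circle. b x = x)"
    using a b unfolding half_set_def by auto
  moreover have "half_rot x \<in> circle" if "x \<in> circle" for x
    using that by (simp add: half_rot_def circle_def)
  moreover have "half_rot (half_rot x) = x" for x by (simp add: half_rot_def)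
  ultimately show ?thesis unfolding half_set_def o_def by auto
qed

lemma pc_rel_compose:
  assumes "(a, a') \<in> pc_rel (half_set P)" "(b, b') \<in> pc_rel (half_set P)"
  shows "(a \<circ> b, a' \<circ> b') \<in> pc_rel (half_set P)"
proof -
  let ?S = "half_set P"
  obtain H where H: "smooth_path_in ?S H" "\<forall>x\<in>disk. H 0 x = a x" "\<forall>x\<in>disk. H 1 x = a' x"
    and aa': "a \<in> ?S" "a' \<in> ?S" using assms(1) unfolding pc_rel_def by blast
  obtain K where K: "smooth_path_in ?S K" "\<forall>x\<in>disk. K 0 x = b x" "\<forall>x\<in>disk. K 1 x = b' x"
    and bb': "b \<in> ?S" "b' \<in> ?S" using assms(2) unfolding pc_rel_def by blast
  have in_S: "\<forall>t\<in>{0..1}. H t \<in> ?S" "\<forall>t\<in>{0..1}. K t \<in> ?S"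
    using H(1) K(1) unfolding smooth_path_in_def by auto
  then have "\<forall>t\<in>{0..1}. \<forall>x\<in>disk. K t x \<in> disk"
    using half_set_subset_Diff_plus unfolding Diff_plus_def by blast
  then have "family_C n (\<lambda>t x. H t (K t x))" for n
    by (rule family_C_compose[OF smooth_path_in_family_C[OF H(1) half_set_subset_Diff_plus]
        smooth_path_in_family_C[OF K(1) half_set_subset_Diff_plus]])
  moreover have "\<forall>t\<in>{0..1}. (\<lambda>x. H t (K t x)) \<in> ?S"
    using in_S half_set_compose by (simp add: o_def)
  ultimately have "smooth_path_in ?S (\<lambda>t x. H t (K t x))" by (blast intro: smooth_path_inI)
  moreover have "b x \<in> disk" "b' x \<in> disk" if "x \<in> disk" for x
    using bb' half_set_subset_Diff_plus that unfolding Diff_plus_def by blast+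
  then have "\<forall>x\<in>disk. H 0 (K 0 x) = (a \<circ> b) x" "\<forall>x\<in>disk. H 1 (K 1 x) = (a' \<circ> b') x"
    using H(2,3) K(2,3) by simp_all
  moreover have "a \<circ> b \<in> ?S" "a' \<circ> b' \<in> ?S" using half_set_compose aa' bb' by blast+
  ultimately show ?thesis unfolding pc_rel_def by blast
qed

lemma pc_rel_if_eq_on_disk:
  assumes "a \<in> half_set P" "b \<in> half_set P" "\<forall>x\<in>disk. a x = b x"
  shows "(a, b) \<in> pc_rel (half_set P)"
proof -
  have "smooth_path_in (half_set P) (\<lambda>t. b)"
    by (rule smooth_path_in_const[OF assms(2) half_set_subset_Diff_plus])
  then show ?thesis using assms unfolding pc_rel_def by auto
qed

text \<open>Along a path in \<open>half_set P\<close> the value at the boundary point 1 moves continuously inside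
  \<open>{-1, 1}\<close>, so the boundary behaviour is constant on path components.\<close>

lemma pc_rel_half_rot_on_circle:
  assumes "(T, T') \<in> pc_rel (half_set P)"
  shows "(\<forall>x\<in>circle. T' x = half_rot x) \<longleftrightarrow> (\<forall>x\<in>circle. T x = half_rot x)"
proof -
  obtain H where H: "smooth_path_in (half_set P) H" "\<forall>x\<in>disk. H 0 x = T x" "\<forall>x\<in>disk. H 1 x = T' x"
    using assms unfolding pc_rel_def by blast
  have HS: "\<forall>t\<in>{0..1}. H t \<in> half_set P" using H(1) unfolding smooth_path_in_def by auto
  have one: "(1::complex) \<in> circle" "(1::complex) \<in> disk" by (auto simp: circle_def disk_def)
  have circle_disk: "x \<in> circle \<Longrightarrow> x \<in> disk" for x by (auto simp: circle_def disk_def)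
  have alt: "(\<forall>x\<in>circle. H t x = half_rot x) \<or> (\<forall>x\<in>circle. H t x = x)" if "t \<in> {0..1}" for t
    using HS that unfolding half_set_def by blast
  have half_rot_iff: "(\<forall>x\<in>circle. H t x = half_rot x) \<longleftrightarrow> Re (H t 1) = -1" if "t \<in> {0..1}" for t
    using alt[OF that] one(1) by (auto simp: half_rot_def)
  have vals: "Re (H t 1) = 1 \<or> Re (H t 1) = -1" if "t \<in> {0..1}" for t
    using alt[OF that] one(1) by (auto simp: half_rot_def)
  have "continuous_on ({0..1} \<times> disk) (\<lambda>p. H (fst p) (snd p))"
    using family_C_continuous[OF smooth_path_in_family_C[OF H(1) half_set_subset_Diff_plus, of 0]]
    by (simp add: case_prod_beta')
  then have "continuous_on {0..1::real} (\<lambda>t. H (fst (t, 1::complex)) (snd (t, 1::complex)))"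
    by (rule continuous_on_compose2) (auto intro: continuous_intros simp: one)
  then have cont: "continuous_on {0..1::real} (\<lambda>t. Re (H t 1))" by (auto intro: continuous_intros)
  have "Re (H 0 1) = Re (H 1 1)"
  proof (rule ccontr)
    assume ne: "Re (H 0 1) \<noteq> Re (H 1 1)"
    have "\<exists>t. 0 \<le> t \<and> t \<le> 1 \<and> Re (H t 1) = 0"
    proof (cases "Re (H 0 1) = -1")
      case True
      then have "Re (H 1 1) = 1" using ne vals[of 1] by auto
      with True show ?thesis by (intro IVT'[OF _ _ _ cont]) auto
    next
      case False
      then have "Re (H 0 1) = 1" "Re (H 1 1) = -1" using ne vals[of 0] vals[of 1] by auto
      then show ?thesis by (intro IVT2'[OF _ _ _ cont]) auto
    qed
    then obtain t where "t \<in> {0..1}" "Re (H t 1) = 0" by auto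
    then show False using vals[of t] by auto
  qed
  then show ?thesis using half_rot_iff[of 0] half_rot_iff[of 1] H(2,3) circle_disk by auto
qed

lemma MCG_half_mult_classes:
  assumes a: "a \<in> half_set P" and b: "b \<in> half_set P"
  shows "pc_rel (half_set P) `` {a} \<otimes>\<^bsub>MCG_half P\<^esub> pc_rel (half_set P) `` {b}
       = pc_rel (half_set P) `` {a \<circ> b}"
proof -
  let ?C = "pc_rel (half_set P)"
  have E: "equiv (half_set P) ?C" by (rule equiv_pc_rel[OF half_set_subset_Diff_plus])
  have "(SOME a'. a' \<in> ?C `` {a}) \<in> ?C `` {a}"
    by (rule someI[of "\<lambda>z. z \<in> ?C `` {a}", OF equiv_class_self[OF E a]])
  moreover have "(SOME b'. b' \<in> ?C `` {b}) \<in> ?C `` {b}"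
    by (rule someI[of "\<lambda>z. z \<in> ?C `` {b}", OF equiv_class_self[OF E b]])
  ultimately have "(a \<circ> b, (SOME a'. a' \<in> ?C `` {a}) \<circ> (SOME b'. b' \<in> ?C `` {b})) \<in> ?C"
    using pc_rel_compose by blast
  then show ?thesis using equiv_class_eq[OF E] by (simp add: MCG_half_def)
qed

text \<open>A smooth involution realising the half rotation gives the splitting; no isotopy is needed
  since \<open>T \<circ> T\<close> equals the identity on the disk.\<close>

lemma MCG_half_splitting_of_involution:
  assumes T: "T \<in> half_set P" "\<forall>x\<in>circle. T x = half_rot x" "\<forall>x\<in>disk. T (T x) = x"
  shows "\<exists>\<sigma>. \<sigma> \<in> hom (integer_mod_group 2) (MCG_half P) \<and>
             (\<forall>k \<in> carrier (integer_mod_group 2). bdry_class (\<sigma> k) = k)"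
proof -
  let ?C = "pc_rel (half_set P)"
  define r where "r = (\<lambda>k::int. if k = 0 then id else T)"
  define \<sigma> where "\<sigma> = (\<lambda>k. ?C `` {r k})"
  have E: "equiv (half_set P) ?C" by (rule equiv_pc_rel[OF half_set_subset_Diff_plus])
  have carrier: "carrier (integer_mod_group 2) = {0, 1}"
    by (auto simp: carrier_integer_mod_group)
  have r: "r k \<in> half_set P" for k using T id_half_set by (simp add: r_def)
  have TT: "?C `` {T \<circ> T} = ?C `` {id}"
    using T(3) half_set_compose[OF T(1) T(1)] id_half_set
    by (intro equiv_class_eq[OF E] pc_rel_if_eq_on_disk) auto
  have "\<sigma> \<in> hom (integer_mod_group 2) (MCG_half P)"
  proof (rule homI)
    show "\<sigma> k \<in> carrier (MCG_half P)" for k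
      unfolding \<sigma>_def by (simp add: MCG_half_def quotientI r)
    fix k l assume "k \<in> carrier (integer_mod_group 2)" "l \<in> carrier (integer_mod_group 2)"
    then show "\<sigma> (k \<otimes>\<^bsub>integer_mod_group 2\<^esub> l) = \<sigma> k \<otimes>\<^bsub>MCG_half P\<^esub> \<sigma> l"
      unfolding \<sigma>_def MCG_half_mult_classes[OF r r] using carrier TT by (auto simp: r_def)
  qed
  moreover have "bdry_class (\<sigma> k) = k" if k: "k \<in> carrier (integer_mod_group 2)" for k
  proof -
    have "(SOME R. R \<in> \<sigma> k) \<in> \<sigma> k"
      unfolding \<sigma>_def by (rule someI[of "\<lambda>z. z \<in> ?C `` {r k}", OF equiv_class_self[OF E r]])
    then have "(r k, SOME R. R \<in> \<sigma> k) \<in> ?C" unfolding \<sigma>_def by simp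
    then have "(\<forall>x\<in>circle. (SOME R. R \<in> \<sigma> k) x = half_rot x) \<longleftrightarrow> (\<forall>x\<in>circle. r k x = half_rot x)"
      by (rule pc_rel_half_rot_on_circle)
    moreover have "\<not> (\<forall>x\<in>circle. id x = half_rot x)"
    proof
      assume "\<forall>x\<in>circle. id x = half_rot x"
      then have "id 1 = half_rot (1::complex)" by (simp add: circle_def)
      then show False by (simp add: half_rot_def)
    qed
    ultimately show ?thesis using k carrier T(2) by (auto simp: bdry_class_def r_def)
  qed
  ultimately show ?thesis by blast
qed

section \<open>Moebius automorphisms and twists\<close>

definition mobius :: "complex \<Rightarrow> complex \<Rightarrow> complex" where
  "mobius c z = (z - c) / (1 - cnj c * z)"

lemma mobius_self [simp]: "mobius c c = 0"
  by (simp add: mobius_def)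

lemma mobius_denominator_nonzero: "cmod c < 1 \<Longrightarrow> cmod z \<le> 1 \<Longrightarrow> 1 - cnj c * z \<noteq> 0"
proof
  assume c: "cmod c < 1" and z: "cmod z \<le> 1" and "1 - cnj c * z = 0"
  then have "cnj c * z = 1" by simp
  then have "cmod c * cmod z = 1" by (metis complex_mod_cnj norm_mult norm_one)
  moreover have "cmod c * cmod z < 1"
    using c z by (metis mult_le_one norm_ge_zero less_le_not_le linorder_not_less
        mult_less_cancel_left1 less_le_trans mult_left_le norm_not_less_zero)
  ultimately show False by simp
qed

lemma norm_mobius_squared:
  assumes c: "cmod c < 1" and z: "cmod z \<le> 1"
  shows "(cmod (mobius c z))\<^sup>2 = 1 - (1 - (cmod z)\<^sup>2) * (1 - (cmod c)\<^sup>2) / (cmod (1 - cnj c * z))\<^sup>2"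
proof -
  have d: "cmod (1 - cnj c * z) > 0" using mobius_denominator_nonzero[OF c z] by simp
  have "complex_of_real ((cmod (1 - cnj c * z))\<^sup>2 - (cmod (z - c))\<^sup>2)
      = complex_of_real ((1 - (cmod z)\<^sup>2) * (1 - (cmod c)\<^sup>2))"
    by (simp only: of_real_diff of_real_mult of_real_1 complex_norm_square) (simp add: algebra_simps)
  then have "(cmod (1 - cnj c * z))\<^sup>2 - (cmod (z - c))\<^sup>2 = (1 - (cmod z)\<^sup>2) * (1 - (cmod c)\<^sup>2)"
    by (rule of_real_eq_iff[THEN iffD1])
  then have eq: "(cmod (z - c))\<^sup>2 = (cmod (1 - cnj c * z))\<^sup>2 - (1 - (cmod z)\<^sup>2) * (1 - (cmod c)\<^sup>2)"
    by simp
  have "(cmod (mobius c z))\<^sup>2 = (cmod (z - c))\<^sup>2 / (cmod (1 - cnj c * z))\<^sup>2"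
    by (simp add: mobius_def norm_divide power_divide)
  also have "\<dots> = 1 - (1 - (cmod z)\<^sup>2) * (1 - (cmod c)\<^sup>2) / (cmod (1 - cnj c * z))\<^sup>2"
    unfolding eq using d by (simp add: field_simps)
  finally show ?thesis .
qed

lemma norm_mobius_le_1:
  assumes c: "cmod c < 1" and z: "cmod z \<le> 1"
  shows "cmod (mobius c z) \<le> 1"
proof -
  have "(1 - (cmod z)\<^sup>2) * (1 - (cmod c)\<^sup>2) / (cmod (1 - cnj c * z))\<^sup>2 \<ge> 0"
    using c z by (intro divide_nonneg_nonneg mult_nonneg_nonneg) (auto simp: abs_square_le_1)
  then have "(cmod (mobius c z))\<^sup>2 \<le> 1" using norm_mobius_squared[OF c z] by simp
  then show ?thesis by (simp add: abs_square_le_1)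
qed

lemma norm_mobius_eq_1:
  assumes c: "cmod c < 1" and z: "cmod z = 1"
  shows "cmod (mobius c z) = 1"
proof -
  have "(cmod (mobius c z))\<^sup>2 = 1" using norm_mobius_squared[OF c] z by simp
  then show ?thesis using norm_ge_zero[of "mobius c z"] by (auto simp: power2_eq_1_iff)
qed

lemma norm_mobius_less_1:
  assumes c: "cmod c < 1" and z: "cmod z < 1"
  shows "cmod (mobius c z) < 1"
proof -
  have d: "cmod (1 - cnj c * z) > 0" using mobius_denominator_nonzero[OF c] z by simp
  have "(cmod z)\<^sup>2 < 1" "(cmod c)\<^sup>2 < 1" using c z by (simp_all add: abs_square_less_1)
  then have "(1 - (cmod z)\<^sup>2) * (1 - (cmod c)\<^sup>2) / (cmod (1 - cnj c * z))\<^sup>2 > 0"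
    using d by (intro divide_pos_pos mult_pos_pos) auto
  then have "(cmod (mobius c z))\<^sup>2 < 1" using norm_mobius_squared[OF c] z by simp
  then show ?thesis by (simp add: abs_square_less_1)
qed

lemma mobius_inverse:
  assumes c: "cmod c < 1" and z: "cmod z \<le> 1"
  shows "mobius (-c) (mobius c z) = z"
proof -
  define d where "d = 1 - cnj c * z"
  have d: "d \<noteq> 0" using mobius_denominator_nonzero[OF c z] d_def by simp
  have cc: "1 - cnj c * c \<noteq> 0" using mobius_denominator_nonzero[OF c, of c] c by simp
  have "(z - c) / d + c = (z - c + c * d) / d" "1 + cnj c * ((z - c) / d) = (d + cnj c * (z - c)) / d"
    using d by (simp_all add: field_simps)
  then have "mobius (-c) (mobius c z) = (z - c + c * d) / (d + cnj c * (z - c))"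
    using d by (simp add: mobius_def d_def[symmetric] divide_divide_eq_right)
  also have "z - c + c * d = z * (1 - cnj c * c)" by (simp add: d_def algebra_simps)
  also have "d + cnj c * (z - c) = 1 - cnj c * c" by (simp add: d_def algebra_simps)
  finally show ?thesis using cc by simp
qed

lemma mobius_eq_0_iff:
  assumes "cmod c < 1" "cmod z \<le> 1"
  shows "mobius c z = 0 \<longleftrightarrow> z = c"
proof
  assume "mobius c z = 0"
  then have "z = mobius (-c) 0" using mobius_inverse[OF assms] by simp
  then show "z = c" by (simp add: mobius_def)
qed simp

lemma diffeo_pair_mobius:
  assumes c: "cmod c < 1"
  shows "diffeo_pair (mobius c) (mobius (-c))"
proof -
  have c': "cmod (-c) < 1" using c by simp
  have holo: "mobius a holomorphic_on {z. 1 - cnj a * z \<noteq> 0}" for a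
    unfolding mobius_def[abs_def] by (intro holomorphic_intros) auto
  have open_dom: "open {z. 1 - cnj a * z \<noteq> 0}" for a
    by (rule open_Collect_neq) (intro continuous_intros)+
  have dom: "disk \<subseteq> {z. 1 - cnj a * z \<noteq> 0}" if "cmod a < 1" for a
    using mobius_denominator_nonzero[OF that] by (auto simp: disk_def)
  show ?thesis
  proof (rule diffeo_pair_holomorphic[OF holo open_dom dom[OF c] holo open_dom dom[OF c']])
    show "\<forall>x\<in>disk. mobius c x \<in> disk \<and> mobius (- c) x \<in> disk \<and> mobius (- c) (mobius c x) = x \<and>
        mobius c (mobius (- c) x) = x"
      using norm_mobius_le_1[OF c] norm_mobius_le_1[OF c'] mobius_inverse[OF c] mobius_inverse[OF c']
      by (auto simp: disk_def)
  qed
qed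

text \<open>The twist rotates each circle \<open>|z| = \<rho>\<close> by the angle \<open>\<theta>(\<rho>\<^sup>2)\<close>; \<open>\<theta>\<close> is entire and
  real on the reals, so that the twist is smooth and norm-preserving.\<close>

definition twist :: "(complex \<Rightarrow> complex) \<Rightarrow> complex \<Rightarrow> complex" where
  "twist \<theta> z = z * exp (\<i> * \<theta> (z * cnj z))"

definition real_entire :: "(complex \<Rightarrow> complex) \<Rightarrow> bool" where
  "real_entire \<theta> \<longleftrightarrow> \<theta> holomorphic_on UNIV \<and> (\<forall>r::real. \<theta> (of_real r) \<in> \<real>)"

lemma norm_exp_i_times_real: "s \<in> \<real> \<Longrightarrow> cmod (exp (\<i> * s)) = 1"
  by (metis Reals_cases norm_exp_i_times)

lemma real_entire_uminus: "real_entire \<theta> \<Longrightarrow> real_entire (\<lambda>w. - \<theta> w)"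
  unfolding real_entire_def by (auto intro!: holomorphic_intros)

lemma real_entire_mult_cnj: "real_entire \<theta> \<Longrightarrow> \<theta> (z * cnj z) \<in> \<real>"
  unfolding real_entire_def by (metis complex_norm_square)

lemma deriv_real_entire:
  assumes "real_entire \<theta>"
  shows "deriv \<theta> (of_real r) \<in> \<real>"
proof -
  let ?x = "complex_of_real r"
  have h: "\<theta> holomorphic_on UNIV" and re: "\<forall>r::real. \<theta> (of_real r) \<in> \<real>"
    using assms real_entire_def by auto
  have "(\<theta> has_field_derivative deriv \<theta> ?x) (at ?x within \<real>)"
    using holomorphic_derivI[OF h] by simp
  then have lim: "((\<lambda>y. (\<theta> y - \<theta> ?x) / (y - ?x)) \<longlongrightarrow> deriv \<theta> ?x) (at ?x within \<real>)"
    using has_field_derivative_iff by blast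
  have ev: "\<forall>\<^sub>F y in at ?x within \<real>. (\<theta> y - \<theta> ?x) / (y - ?x) \<in> \<real>"
    unfolding eventually_at_filter
    by (rule always_eventually) (metis Reals_cases Reals_diff Reals_divide Reals_of_real re)
  have "?x islimpt \<real>"
  proof (rule islimptI)
    fix T assume "?x \<in> T" "open T"
    then obtain e where e: "e > 0" "ball ?x e \<subseteq> T" using open_contains_ball by blast
    have "complex_of_real (r + e/2) \<in> ball ?x e" using e by (simp add: dist_norm)
    moreover have "complex_of_real (r + e/2) \<noteq> ?x" using e by simp
    ultimately show "\<exists>y\<in>\<real>. y \<in> T \<and> y \<noteq> ?x" using e by (metis Reals_of_real subsetD)
  qed
  then have "at ?x within \<real> \<noteq> bot" using trivial_limit_within by blast
  from Lim_in_closed_set[OF closed_complex_Reals ev this lim] show ?thesis .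
qed

lemma norm_twist: "real_entire \<theta> \<Longrightarrow> cmod (twist \<theta> z) = cmod z"
  using norm_exp_i_times_real[OF real_entire_mult_cnj] unfolding twist_def
  by (simp add: norm_mult)

lemma twist_uminus_twist: "real_entire \<theta> \<Longrightarrow> twist (\<lambda>w. - \<theta> w) (twist \<theta> z) = z"
proof -
  assume \<theta>: "real_entire \<theta>"
  have "twist \<theta> z * cnj (twist \<theta> z) = z * cnj z"
    using norm_twist[OF \<theta>, of z] complex_norm_square by metis
  then have "twist (\<lambda>w. - \<theta> w) (twist \<theta> z) = twist \<theta> z * exp (\<i> * - \<theta> (z * cnj z))"
    unfolding twist_def[of "\<lambda>w. - \<theta> w"] by simp
  also have "\<dots> = z * exp (\<i> * \<theta> (z * cnj z)) * exp (\<i> * - \<theta> (z * cnj z))"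
    by (simp add: twist_def)
  finally show ?thesis by (simp add: mult.assoc exp_add[symmetric])
qed

lemma twist_eq_self: "\<theta> (z * cnj z) = 0 \<Longrightarrow> twist \<theta> z = z"
  by (simp add: twist_def)

lemma smooth_disk_twist: "\<theta> holomorphic_on UNIV \<Longrightarrow> smooth_disk (twist \<theta>)"
proof (rule smooth_diskI_family_C)
  fix n assume \<theta>: "\<theta> holomorphic_on UNIV"
  have E: "(\<lambda>w. exp (\<i> * \<theta> w)) holomorphic_on UNIV" using \<theta> by (intro holomorphic_intros)
  have "family_C n (\<lambda>t z. z * cnj z)"
    by (rule family_C_mult[OF family_C_ident
          family_C_bounded_linear[OF bounded_linear_cnj family_C_ident]])
  from family_C_mult[OF family_C_ident family_C_holomorphic_compose[OF E open_UNIV this]]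
  show "family_C n (\<lambda>t. twist \<theta>)" unfolding twist_def[abs_def] by simp
qed

text \<open>With \<open>e = exp(i \<theta>(|x|\<^sup>2))\<close> and \<open>s = \<theta>'(|x|\<^sup>2)\<close>, the derivative of the twist at \<open>x\<close> is
  \<open>e\<close> times \<open>v \<mapsto> v + i s x (x cnj v + v cnj x)\<close>: the identity plus a rank-one map of trace zero.\<close>

lemma twist_jacobian_algebra:
  assumes "cnj e * e = 1"
  shows "Im (cnj (x * (e * (\<i> * complex_of_real s) * (x * cnj 1 + 1 * cnj x)) + 1 * e) *
             (x * (e * (\<i> * complex_of_real s) * (x * cnj \<i> + \<i> * cnj x)) + \<i> * e)) = 1"
proof -
  define A where "A = x * (\<i> * complex_of_real s) * (x * cnj 1 + 1 * cnj x) + 1"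
  define B where "B = x * (\<i> * complex_of_real s) * (x * cnj \<i> + \<i> * cnj x) + \<i>"
  have "cnj (x * (e * (\<i> * complex_of_real s) * (x * cnj 1 + 1 * cnj x)) + 1 * e) *
             (x * (e * (\<i> * complex_of_real s) * (x * cnj \<i> + \<i> * cnj x)) + \<i> * e)
        = (cnj e * e) * (cnj A * B)"
    unfolding A_def B_def by (simp add: algebra_simps)
  moreover have "Im (cnj A * B) = 1"
    unfolding A_def B_def by (simp add: algebra_simps power2_eq_square)
  ultimately show ?thesis using assms by simp
qed

lemma jac_det_twist:
  assumes \<theta>: "real_entire \<theta>" and x: "x \<in> disk"
  shows "jac_det (twist \<theta>) x = 1"
proof -
  have h: "\<theta> holomorphic_on UNIV" using \<theta> real_entire_def by auto
  define E where "E = (\<lambda>w. exp (\<i> * \<theta> w))"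
  have Eh: "E holomorphic_on UNIV" unfolding E_def using h by (intro holomorphic_intros)
  have dE: "deriv E w = E w * (\<i> * deriv \<theta> w)" for w
  proof -
    have "(\<theta> has_field_derivative deriv \<theta> w) (at w)" using holomorphic_derivI[OF h] by simp
    then have "(E has_field_derivative E w * (\<i> * deriv \<theta> w)) (at w)"
      unfolding E_def by (auto intro!: derivative_eq_intros)
    then show ?thesis by (rule DERIV_imp_deriv)
  qed
  have di: "(\<lambda>y. y) differentiable (at x within disk)"
    by (rule differentiableI[OF has_derivative_ident])
  have dc: "cnj differentiable (at x within disk)"
    using has_derivative_cnj[OF has_derivative_ident] differentiableI by fastforce
  have dq_d: "(\<lambda>z. z * cnj z) differentiable (at x within disk)"
    using has_derivative_mult[OF has_derivative_ident has_derivative_cnj[OF has_derivative_ident]]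
      differentiableI by blast
  have dq: "dpart v (\<lambda>z. z * cnj z) x = x * cnj v + v * cnj x" for v
    using dpart_mult[OF di dc x] dpart_ident[OF x] dpart_cnj[OF x] by simp
  have dEq_d: "(\<lambda>z. E (z * cnj z)) differentiable (at x within disk)"
  proof -
    have "E differentiable (at (x * cnj x) within (\<lambda>z. z * cnj z) ` disk)"
      using holomorphic_derivI[OF Eh open_UNIV] has_field_derivative_imp_has_derivative
        differentiableI by blast
    from differentiable_chain_within[OF dq_d this] show ?thesis by (simp add: o_def)
  qed
  have dEq: "dpart v (\<lambda>z. E (z * cnj z)) x = deriv E (x * cnj x) * dpart v (\<lambda>z. z * cnj z) x" for v
    using dpart_holomorphic_compose[OF Eh open_UNIV dq_d x] by simp
  have tw: "twist \<theta> = (\<lambda>z. z * E (z * cnj z))" by (auto simp: twist_def E_def fun_eq_iff)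
  have dtw: "dpart v (twist \<theta>) x = x * dpart v (\<lambda>z. E (z * cnj z)) x + v * E (x * cnj x)" for v
    unfolding tw using dpart_mult[OF di dEq_d x] dpart_ident[OF x] by simp
  define e where "e = E (x * cnj x)"
  have "deriv \<theta> (x * cnj x) \<in> \<real>"
    using deriv_real_entire[OF \<theta>, of "(cmod x)\<^sup>2"] by (simp only: complex_norm_square)
  then obtain s where s: "deriv \<theta> (x * cnj x) = complex_of_real s" by (rule Reals_cases)
  have "cmod e = 1"
    unfolding e_def E_def by (rule norm_exp_i_times_real[OF real_entire_mult_cnj[OF \<theta>]])
  then have ee: "cnj e * e = 1" using complex_norm_square[of e] by (simp add: mult.commute)
  have eq: "jac_det (twist \<theta>) x =
      Im (cnj (x * (e * (\<i> * complex_of_real s) * (x * cnj 1 + 1 * cnj x)) + 1 * e) *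
          (x * (e * (\<i> * complex_of_real s) * (x * cnj \<i> + \<i> * cnj x)) + \<i> * e))"
    unfolding jac_det_def dtw dEq dE dq e_def s by (simp add: mult.assoc)
  show ?thesis unfolding eq by (rule twist_jacobian_algebra[OF ee])
qed

lemma diffeo_pair_twist:
  assumes \<theta>: "real_entire \<theta>"
  shows "diffeo_pair (twist \<theta>) (twist (\<lambda>w. - \<theta> w))"
proof -
  have \<theta>': "real_entire (\<lambda>w. - \<theta> w)" using real_entire_uminus[OF \<theta>] .
  have "smooth_disk (twist \<theta>)" "smooth_disk (twist (\<lambda>w. - \<theta> w))"
    using smooth_disk_twist \<theta> \<theta>' unfolding real_entire_def by blast+
  moreover have "twist \<theta> (twist (\<lambda>w. - \<theta> w) z) = z" for z
    using twist_uminus_twist[OF \<theta>'] by simp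
  ultimately show ?thesis unfolding diffeo_pair_def
    using norm_twist[OF \<theta>] norm_twist[OF \<theta>'] twist_uminus_twist[OF \<theta>] jac_det_twist[OF \<theta>]
      jac_det_twist[OF \<theta>'] by (auto simp: disk_def)
qed

lemma exists_twist_rotating:
  assumes R: "finite R" and ab: "cmod a = cmod b" "a \<noteq> 0" and aR: "(cmod a)\<^sup>2 \<notin> R"
  shows "\<exists>\<theta>. real_entire \<theta> \<and> twist \<theta> a = b \<and> (\<forall>z. (cmod z)\<^sup>2 \<in> R \<longrightarrow> twist \<theta> z = z)"
proof -
  define \<alpha> where "\<alpha> = Arg (b / a)"
  have "b \<noteq> 0" using ab by (metis norm_eq_zero)
  moreover have "cmod (b / a) = 1" using ab \<open>b \<noteq> 0\<close> by (simp add: norm_divide)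
  ultimately have cis: "cis \<alpha> = b / a"
    unfolding \<alpha>_def using ab(2) by (subst cis_Arg) (auto simp: sgn_div_norm)
  define \<rho> where "\<rho> = (cmod a)\<^sup>2"
  have nz: "complex_of_real \<rho> - of_real y \<noteq> 0" if "y \<in> R" for y
  proof -
    have "\<rho> \<noteq> y" using aR that \<rho>_def by auto
    then show ?thesis by simp
  qed
  define \<theta> where "\<theta> = (\<lambda>w::complex. of_real \<alpha> * (\<Prod>y\<in>R. (w - of_real y) / (of_real \<rho> - of_real y)))"
  have "real_entire \<theta>"
    unfolding real_entire_def
  proof
    show "\<theta> holomorphic_on UNIV" unfolding \<theta>_def by (intro holomorphic_intros) (use nz in blast)
    show "\<forall>t::real. \<theta> (of_real t) \<in> \<real>"
      by (simp add: \<theta>_def of_real_prod[symmetric])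
  qed
  moreover have "\<theta> (of_real \<rho>) = of_real \<alpha>"
    using nz by (simp add: \<theta>_def)
  then have "twist \<theta> a = b"
    using ab(2) cis by (simp add: twist_def \<rho>_def complex_norm_square[symmetric] cis_conv_exp)
  moreover have "\<theta> (of_real y) = 0" if "y \<in> R" for y
    unfolding \<theta>_def using R that by (auto intro!: prod_zero)
  then have "twist \<theta> z = z" if "(cmod z)\<^sup>2 \<in> R" for z
    using that by (intro twist_eq_self) (simp only: complex_norm_square[symmetric])
  ultimately show ?thesis by blast
qed

lemma Re_cis_mult_eq_0_unique:
  assumes d: "d \<noteq> 0" and a: "0 < a" "a < pi/2" and b: "0 < b" "b < pi/2"
    and "Re (cis (- a) * d) = 0" "Re (cis (- b) * d) = 0"
  shows "a = b"
proof -
  have ea: "cos a * Re d + sin a * Im d = 0" and eb: "cos b * Re d + sin b * Im d = 0"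
    using assms(6,7) by (simp_all add: cis.code)
  have "Re d * (cos a * sin b - sin a * cos b)
      = sin b * (cos a * Re d + sin a * Im d) - sin a * (cos b * Re d + sin b * Im d)"
    by (simp add: algebra_simps)
  then have "Re d * (cos a * sin b - sin a * cos b) = 0" using ea eb by simp
  moreover have "Im d * (cos a * sin b - sin a * cos b)
      = cos a * (cos b * Re d + sin b * Im d) - cos b * (cos a * Re d + sin a * Im d)"
    by (simp add: algebra_simps)
  then have "Im d * (cos a * sin b - sin a * cos b) = 0" using ea eb by simp
  ultimately have "cos a * sin b - sin a * cos b = 0"
    using d by (metis complex_eq_iff mult_eq_0_iff zero_complex.sel)
  then have "sin (b - a) = 0" by (simp add: sin_diff algebra_simps)
  then have "b - a = 0" by (rule sin_eq_0_pi[rotated 2]) (use a b in auto)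
  then show ?thesis by simp
qed

lemma exists_angle_avoiding:
  assumes F: "finite F" and d: "\<forall>x\<in>F. d x \<noteq> 0" and a: "0 < a" "a \<le> pi/2"
  shows "\<exists>\<alpha>. 0 < \<alpha> \<and> \<alpha> < a \<and> (\<forall>x\<in>F. Re (cis (- \<alpha>) * d x) \<noteq> 0)"
proof -
  define Z where "Z = (\<lambda>x. {\<alpha>\<in>{0<..<a}. Re (cis (- \<alpha>) * d x) = 0})"
  have "finite (Z x)" if x: "x \<in> F" for x
  proof (cases "Z x = {}")
    case False
    then obtain \<beta> where "\<beta> \<in> Z x" by blast
    then have "Z x \<subseteq> {\<beta>}"
      using Re_cis_mult_eq_0_unique[OF d[rule_format, OF x]] a by (auto simp: Z_def)
    then show ?thesis by (rule finite_subset) simp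
  qed simp
  then have "finite (\<Union>x\<in>F. Z x)" using F by blast
  moreover have "infinite {0<..<a}" using a by simp
  ultimately obtain \<alpha> where "\<alpha> \<in> {0<..<a} - (\<Union>x\<in>F. Z x)"
    by (metis Diff_infinite_finite finite.emptyI ex_in_conv)
  then show ?thesis unfolding Z_def by auto
qed

lemma exists_radius:
  fixes \<tau> k :: real
  assumes \<tau>: "0 < \<tau>" "\<tau> < k"
  shows "\<exists>r. 0 < r \<and> r < 1 \<and> \<tau> * (1 + r\<^sup>2) = 2 * r * k"
proof -
  define D where "D = sqrt (k\<^sup>2 - \<tau>\<^sup>2)"
  have D: "0 \<le> D" "D * D = k * k - \<tau> * \<tau>"
    using \<tau> by (simp_all add: D_def power2_eq_square mult_strict_mono less_imp_le)
  have "\<tau> * \<tau> < \<tau> * k" using \<tau> by simp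
  then have "(k - \<tau>)\<^sup>2 < D\<^sup>2" using D(2) by (simp add: power2_eq_square algebra_simps)
  then have kD: "k - \<tau> < D" using D(1) by (rule power2_less_imp_less)
  have "D\<^sup>2 < k\<^sup>2" using \<tau> D(2) by (simp add: power2_eq_square)
  then have Dk: "D < k" using \<tau> by (auto intro: power2_less_imp_less)
  define r where "r = (k - D) / \<tau>"
  have "\<tau> * (1 + r\<^sup>2) * \<tau> = \<tau> * \<tau> + (k - D) * (k - D)"
    using \<tau> by (simp add: r_def power2_eq_square field_simps)
  also have "\<dots> = 2 * k * (k - D)" using D(2) by (simp add: algebra_simps)
  also have "\<dots> = 2 * r * k * \<tau>" using \<tau> by (simp add: r_def)
  finally have "\<tau> * (1 + r\<^sup>2) = 2 * r * k" using \<tau> by simp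
  moreover have "0 < r" "r < 1" using kD Dk \<tau> by (simp_all add: r_def)
  ultimately show ?thesis by blast
qed

text \<open>The circle \<open>|mobius c z| = |c|\<close> passes through 0; for \<open>c = r cis \<alpha>\<close> with the radius \<open>r\<close> of
  \<open>exists_radius\<close> (taking \<open>k = cos \<alpha>\<close>) it also passes through \<open>\<tau>\<close>. Varying \<open>\<alpha>\<close> gives a pencil of
  circles through 0 and \<open>\<tau>\<close>, and only finitely many of them meet a given finite set.\<close>

lemma norm_mobius_eq_radius_iff:
  assumes r: "0 < r" "r < 1" and \<tau>: "\<tau> > 0" "\<tau> * (1 + r\<^sup>2) = 2 * r * cos \<alpha>" and z: "cmod z \<le> 1"
  shows "cmod (mobius (of_real r * cis \<alpha>) z) = r \<longleftrightarrow>
    Re (cis (- \<alpha>) * (z - of_real ((cmod z)\<^sup>2 / \<tau>))) = 0"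
proof -
  define c where "c = of_real r * cis \<alpha>"
  have c: "cmod c = r" "cmod c < 1" using r by (simp_all add: c_def norm_mult)
  define D where "D = (cmod (1 - cnj c * z))\<^sup>2"
  have D: "D > 0" using mobius_denominator_nonzero[OF c(2) z] by (simp add: D_def)
  have "Re (cnj c * z) = r * Re (cis (- \<alpha>) * z)" by (simp add: c_def cis_cnj algebra_simps)
  moreover have "D = 1 - 2 * Re (cnj c * z) + (cmod c)\<^sup>2 * (cmod z)\<^sup>2"
    unfolding D_def cmod_power2 by (simp add: algebra_simps power2_eq_square)
  ultimately have D_eq: "D = 1 - 2 * r * Re (cis (- \<alpha>) * z) + r\<^sup>2 * (cmod z)\<^sup>2"
    using c by simp
  have "cmod (mobius c z) = r \<longleftrightarrow> (cmod (mobius c z))\<^sup>2 = r\<^sup>2"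
    using r by (simp add: power2_eq_iff_nonneg)
  also have "\<dots> \<longleftrightarrow> (1 - (cmod z)\<^sup>2) * (1 - r\<^sup>2) = (1 - r\<^sup>2) * D"
    using norm_mobius_squared[OF c(2) z] c D by (auto simp: D_def field_simps)
  also have "\<dots> \<longleftrightarrow> 1 - (cmod z)\<^sup>2 = D"
    using r by (auto simp: power2_eq_1_iff)
  also have "\<dots> \<longleftrightarrow> (cmod z)\<^sup>2 * (1 + r\<^sup>2) = 2 * r * Re (cis (- \<alpha>) * z)"
    unfolding D_eq by (auto simp: algebra_simps)
  also have "\<dots> \<longleftrightarrow> (2 * r) * (cos \<alpha> * (cmod z)\<^sup>2 / \<tau>) = (2 * r) * Re (cis (- \<alpha>) * z)"
  proof -
    have "1 + r\<^sup>2 = 2 * r * cos \<alpha> / \<tau>" using \<tau> by (simp add: eq_divide_eq mult.commute)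
    then show ?thesis by (simp add: algebra_simps)
  qed
  also have "\<dots> \<longleftrightarrow> Re (cis (- \<alpha>) * z) = cos \<alpha> * (cmod z)\<^sup>2 / \<tau>"
    using r by (subst mult_left_cancel) auto
  also have "\<dots> \<longleftrightarrow> Re (cis (- \<alpha>) * (z - of_real ((cmod z)\<^sup>2 / \<tau>))) = 0"
    by (simp add: cis.code right_diff_distrib)
  finally show ?thesis unfolding c_def .
qed

section \<open>Moving marked points\<close>

lemma of_real_norm_square_div_eq_self:
  assumes \<tau>: "\<tau> > 0" and x: "x = of_real ((cmod x)\<^sup>2 / \<tau>)"
  shows "x = 0 \<or> x = of_real \<tau>"
proof -
  have "cmod x = (cmod x)\<^sup>2 / \<tau>"
    using x by (metis norm_of_real abs_of_nonneg divide_nonneg_pos zero_le_power2 \<tau>)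
  then have "cmod x = 0 \<or> cmod x = \<tau>" using \<tau> by (auto simp: power2_eq_square field_simps)
  then show ?thesis using x \<tau> by (auto simp: power2_eq_square)
qed

lemma exists_diffeo_moving_0:
  fixes \<tau> :: real
  assumes \<tau>: "0 < \<tau>" "\<tau> < 1"
    and F: "finite F" "F \<subseteq> ball 0 1" "0 \<notin> F" "complex_of_real \<tau> \<notin> F"
  shows "\<exists>G G'. diffeo_pair G G' \<and> (\<forall>x\<in>circle. G x = x) \<and> G 0 = of_real \<tau> \<and> (\<forall>x\<in>F. G x = x)"
proof -
  define d where "d = (\<lambda>x. x - complex_of_real ((cmod x)\<^sup>2 / \<tau>))"
  have "\<forall>x\<in>F. d x \<noteq> 0"
    using of_real_norm_square_div_eq_self[OF \<tau>(1)] F(3,4) by (force simp: d_def)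
  moreover have a: "0 < arccos \<tau>" "arccos \<tau> < pi/2"
    using arccos_less_arccos[of \<tau> 1] arccos_less_arccos[of 0 \<tau>] \<tau> by auto
  ultimately obtain \<alpha> where \<alpha>: "0 < \<alpha>" "\<alpha> < arccos \<tau>"
    and avoid: "\<forall>x\<in>F. Re (cis (- \<alpha>) * d x) \<noteq> 0"
    using exists_angle_avoiding[OF F(1) _ a(1) less_imp_le[OF a(2)]] by blast
  have "cos (arccos \<tau>) < cos \<alpha>" using \<alpha> a by (subst cos_mono_less_eq) auto
  then have "\<tau> < cos \<alpha>" using \<tau> by simp
  then obtain r where r: "0 < r" "r < 1" "\<tau> * (1 + r\<^sup>2) = 2 * r * cos \<alpha>"
    using exists_radius[OF \<tau>(1)] by blast
  define c where "c = of_real r * cis \<alpha>"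
  have c: "cmod c = r" "cmod c < 1" "cmod (-c) < 1" "c \<noteq> 0" using r by (auto simp: c_def norm_mult)
  define M where "M = mobius c"
  have on_circle: "cmod (M z) = r \<longleftrightarrow> Re (cis (- \<alpha>) * d z) = 0" if "cmod z \<le> 1" for z
    unfolding M_def c_def d_def using norm_mobius_eq_radius_iff[OF r(1,2) \<tau>(1) r(3) that] .
  have M\<tau>: "cmod (M (of_real \<tau>)) = r"
    using on_circle[of "of_real \<tau>"] \<tau> by (simp add: d_def power2_eq_square)
  define R where "R = (\<lambda>x. (cmod (M x))\<^sup>2) ` F \<union> {1}"
  have "r\<^sup>2 \<notin> R"
  proof
    assume "r\<^sup>2 \<in> R"
    moreover have "r\<^sup>2 \<noteq> 1" using r by (simp add: power2_eq_1_iff)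
    ultimately obtain x where "x \<in> F" "(cmod (M x))\<^sup>2 = r\<^sup>2" unfolding R_def by auto
    then show False using on_circle[of x] avoid F(2) r(1) by (auto simp: power2_eq_iff_nonneg)
  qed
  then obtain \<theta> where \<theta>: "real_entire \<theta>" "twist \<theta> (-c) = M (of_real \<tau>)"
    and fixed: "\<forall>z. (cmod z)\<^sup>2 \<in> R \<longrightarrow> twist \<theta> z = z"
    using exists_twist_rotating[of R "-c" "M (of_real \<tau>)"] F(1) M\<tau> c by (auto simp: R_def)
  define G where "G = (\<lambda>x. mobius (-c) (twist \<theta> (M x)))"
  have "diffeo_pair G (\<lambda>x. mobius (-c) (twist (\<lambda>w. - \<theta> w) (mobius (-(-c)) x)))"
    unfolding G_def M_def
    using diffeo_pair_compose[OF diffeo_pair_mobius[OF c(3)]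
        diffeo_pair_compose[OF diffeo_pair_twist[OF \<theta>(1)] diffeo_pair_mobius[OF c(2)]]] .
  moreover have "G 0 = of_real \<tau>"
    using \<theta>(2) mobius_inverse[OF c(2), of "of_real \<tau>"] \<tau> by (simp add: G_def M_def mobius_def)
  moreover have "G x = x" if "cmod x \<le> 1" "(cmod (M x))\<^sup>2 \<in> R" for x
    using fixed that mobius_inverse[OF c(2)] by (simp add: G_def M_def)
  then have "\<forall>x\<in>circle. G x = x" "\<forall>x\<in>F. G x = x"
    using norm_mobius_eq_1[OF c(2)] F(2) by (auto simp: circle_def R_def M_def)
  ultimately show ?thesis by blast
qed

lemma diffeo_pair_rotation:
  assumes w: "cmod w = 1"
  shows "diffeo_pair (\<lambda>z. w * z) (\<lambda>z. cnj w * z)"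
proof -
  have ww: "w * cnj w = 1" "cnj w * w = 1"
    using complex_norm_square[of w] w by (simp_all add: mult.commute)
  show ?thesis
    by (rule diffeo_pair_holomorphic[of _ UNIV _ UNIV])
      (auto simp: disk_def norm_mult w ww mult.assoc[symmetric] intro!: holomorphic_intros)
qed

text \<open>A Moebius map and a rotation carry \<open>b\<close> to 0 and \<open>t\<close> to a point of \<open>]0,1[\<close>.\<close>

lemma exists_diffeo_moving_point:
  assumes b: "cmod b < 1" and t: "cmod t < 1" "b \<noteq> t"
    and F: "finite F" "F \<subseteq> ball 0 1" "b \<notin> F" "t \<notin> F"
  shows "\<exists>G G'. diffeo_pair G G' \<and> (\<forall>x\<in>circle. G x = x) \<and> G b = t \<and> (\<forall>x\<in>F. G x = x)"
proof -
  define m where "m = mobius b t"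
  have m0: "m \<noteq> 0" using mobius_eq_0_iff[OF b less_imp_le[OF t(1)]] t(2) by (auto simp: m_def)
  define w where "w = cnj m / complex_of_real (cmod m)"
  have w: "cmod w = 1" using m0 by (simp add: w_def norm_divide)
  define A where "A = (\<lambda>z. w * mobius b z)"
  define A' where "A' = (\<lambda>z. mobius (-b) (cnj w * z))"
  have A: "diffeo_pair A A'"
    unfolding A_def A'_def
    using diffeo_pair_compose[OF diffeo_pair_rotation[OF w] diffeo_pair_mobius[OF b]] .
  have inv: "A' (A x) = x" if "x \<in> disk" for x using A that unfolding diffeo_pair_def by blast
  define \<tau> where "\<tau> = cmod m"
  have At: "A t = of_real \<tau>"
  proof -
    have "A t = cnj m * m / complex_of_real (cmod m)" by (simp add: A_def w_def m_def)
    also have "cnj m * m = complex_of_real ((cmod m)\<^sup>2)"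
      using complex_norm_square[of m] by (simp add: mult.commute)
    finally show ?thesis using m0 by (simp add: \<tau>_def power2_eq_square)
  qed
  have \<tau>: "0 < \<tau>" "\<tau> < 1" using m0 norm_mobius_less_1[OF b t(1)] by (auto simp: \<tau>_def m_def)
  have Ab: "A b = 0" by (simp add: A_def)
  have norm_A: "cmod (A z) = cmod (mobius b z)" for z using w by (simp add: A_def norm_mult)
  have in_disk: "b \<in> disk" "t \<in> disk" "\<And>x. x \<in> F \<Longrightarrow> x \<in> disk"
    using b t F(2) by (auto simp: disk_def)
  have "0 \<notin> A ` F"
  proof
    assume "0 \<in> A ` F"
    then obtain x where "x \<in> F" "A x = A b" using Ab by auto
    then show False using diffeo_pair_inj[OF A] in_disk F(3) by metis
  qed
  moreover have "of_real \<tau> \<notin> A ` F"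
  proof
    assume "of_real \<tau> \<in> A ` F"
    then obtain x where "x \<in> F" "A x = A t" using At by auto
    then show False using diffeo_pair_inj[OF A] in_disk F(4) by metis
  qed
  moreover have "A ` F \<subseteq> ball 0 1" using F(2) norm_mobius_less_1[OF b] norm_A by auto
  moreover have "finite (A ` F)" using F(1) by simp
  ultimately obtain G0 G0' where G0: "diffeo_pair G0 G0'" "\<forall>x\<in>circle. G0 x = x"
    "G0 0 = of_real \<tau>" "\<forall>x\<in>A ` F. G0 x = x"
    using exists_diffeo_moving_0[OF \<tau>, of "A ` F"] by blast
  have "diffeo_pair (\<lambda>z. A' (G0 (A z))) (\<lambda>x. A' (G0' (A x)))"
    using diffeo_pair_compose[OF diffeo_pair_sym[OF A] diffeo_pair_compose[OF G0(1) A]] .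
  moreover have "A x \<in> circle" if "x \<in> circle" for x
    using that norm_A norm_mobius_eq_1[OF b] by (simp add: circle_def)
  then have "\<forall>x\<in>circle. A' (G0 (A x)) = x"
    using G0(2) inv by (simp add: circle_def disk_def)
  moreover have "A' (G0 (A b)) = t" unfolding Ab G0(3) At[symmetric] using inv in_disk by simp
  moreover have "\<forall>x\<in>F. A' (G0 (A x)) = x" using G0(4) inv in_disk by simp
  ultimately show ?thesis by blast
qed

lemma exists_diffeo_moving_list:
  assumes "length qs = length ps" "distinct ps" "distinct qs" "set ps \<inter> set qs = {}"
    "set ps \<subseteq> ball 0 1" "set qs \<subseteq> ball 0 1" "finite F" "F \<subseteq> ball 0 1"
    "F \<inter> (set ps \<union> set qs) = {}"
  shows "\<exists>\<psi> \<psi>'. diffeo_pair \<psi> \<psi>' \<and> (\<forall>x\<in>circle. \<psi> x = x) \<and> map \<psi> ps = qs \<and> (\<forall>x\<in>F. \<psi> x = x)"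
  using assms
proof (induction ps arbitrary: qs F)
  case Nil
  then show ?case using diffeo_pair_ident by auto
next
  case (Cons p ps)
  then obtain q qs' where qs: "qs = q # qs'" by (cases qs) auto
  have "\<exists>G G'. diffeo_pair G G' \<and> (\<forall>x\<in>circle. G x = x) \<and> G p = q \<and> (\<forall>x\<in>F \<union> set ps. G x = x)"
    using Cons.prems qs by (intro exists_diffeo_moving_point) auto
  then obtain G G' where G: "diffeo_pair G G'" "\<forall>x\<in>circle. G x = x" "G p = q"
    "\<forall>x\<in>F \<union> set ps. G x = x" by blast
  have "\<exists>\<psi> \<psi>'. diffeo_pair \<psi> \<psi>' \<and> (\<forall>x\<in>circle. \<psi> x = x) \<and> map \<psi> ps = qs' \<and>
      (\<forall>x\<in>F \<union> {q}. \<psi> x = x)"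
    using Cons.prems qs by (intro Cons.IH) auto
  then obtain \<psi> \<psi>' where \<psi>: "diffeo_pair \<psi> \<psi>'" "\<forall>x\<in>circle. \<psi> x = x" "map \<psi> ps = qs'"
    "\<forall>x\<in>F \<union> {q}. \<psi> x = x" by blast
  have "map (\<lambda>x. \<psi> (G x)) ps = map \<psi> ps" using G(4) by simp
  then have "map (\<lambda>x. \<psi> (G x)) (p # ps) = qs" using \<psi>(3,4) G(3) qs by simp
  then show ?case
    using diffeo_pair_compose[OF \<psi>(1) G(1)] G(2,4) \<psi>(2,4) by auto
qed

text \<open>Pick \<open>g\<close> radii in \<open>]0,1[\<close> avoiding the moduli of the marked points, and put a point and
  its antipode on each.\<close>

lemma exists_symmetric_set:
  assumes P: "finite P" "card P = 2 * g"
  shows "\<exists>Q. finite Q \<and> card Q = 2 * g \<and> Q \<subseteq> ball 0 1 \<and> P \<inter> Q = {} \<and> half_rot ` Q = Q"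
proof -
  have "infinite ({0<..<1::real} - norm ` P)" using P(1) by (simp add: Diff_infinite_finite)
  then obtain S where S: "finite S" "card S = g" "S \<subseteq> {0<..<1::real} - norm ` P"
    using infinite_arbitrarily_large by blast
  define Q where "Q = complex_of_real ` S \<union> (\<lambda>s. - complex_of_real s) ` S"
  have "complex_of_real s \<noteq> - complex_of_real s'" if "s \<in> S" "s' \<in> S" for s s'
  proof -
    have "s > 0" "s' > 0" using S(3) that by auto
    then have "s \<noteq> - s'" by simp
    then show ?thesis by (metis of_real_eq_iff of_real_minus)
  qed
  then have "complex_of_real ` S \<inter> (\<lambda>s. - complex_of_real s) ` S = {}" by blast
  then have "card Q = card (complex_of_real ` S) + card ((\<lambda>s. - complex_of_real s) ` S)"
    unfolding Q_def using S(1) by (intro card_Un_disjoint) auto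
  also have "\<dots> = 2 * g" using S(2) by (simp add: card_image inj_on_def)
  finally have "card Q = 2 * g" .
  moreover have "P \<inter> Q = {}"
  proof (rule ccontr)
    assume "P \<inter> Q \<noteq> {}"
    then obtain s where s: "s \<in> S" "complex_of_real s \<in> P \<or> - complex_of_real s \<in> P"
      by (auto simp: Q_def)
    then have "s > 0" "s \<notin> norm ` P" using S(3) by auto
    then show False using s(2) by (metis abs_of_pos image_eqI norm_minus_cancel norm_of_real)
  qed
  moreover have "half_rot ` Q = Q"
  proof
    show "half_rot ` Q \<subseteq> Q" by (auto simp: Q_def half_rot_def)
    show "Q \<subseteq> half_rot ` Q"
    proof
      fix x assume "x \<in> Q"
      then have "half_rot x \<in> Q" "x = half_rot (half_rot x)" by (auto simp: Q_def half_rot_def)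
      then show "x \<in> half_rot ` Q" by blast
    qed
  qed
  moreover have "finite Q" using S(1) by (simp add: Q_def)
  moreover have "Q \<subseteq> ball 0 1" using S(3) by (auto simp: Q_def)
  ultimately show ?thesis by blast
qed

lemma diffeo_pair_half_rot: "diffeo_pair half_rot half_rot"
  by (rule diffeo_pair_holomorphic[of _ UNIV _ UNIV])
    (auto simp: disk_def half_rot_def[abs_def] intro!: holomorphic_intros)

lemma exists_half_rot_involution:
  assumes P: "finite P" "card P = 2 * g" "P \<subseteq> ball 0 1"
  shows "\<exists>T. T \<in> half_set P \<and> (\<forall>x\<in>circle. T x = half_rot x) \<and> (\<forall>x\<in>disk. T (T x) = x)"
proof -
  obtain Q where Q: "finite Q" "card Q = 2 * g" "Q \<subseteq> ball 0 1" "P \<inter> Q = {}" "half_rot ` Q = Q"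
    using exists_symmetric_set[OF P(1,2)] by blast
  obtain ps where ps: "distinct ps" "set ps = P" using finite_distinct_list[OF P(1)] by blast
  obtain qs where qs: "distinct qs" "set qs = Q" using finite_distinct_list[OF Q(1)] by blast
  have "length qs = length ps"
    using distinct_card[OF ps(1)] distinct_card[OF qs(1)] ps(2) qs(2) P(2) Q(2) by simp
  then obtain \<psi> \<psi>' where \<psi>: "diffeo_pair \<psi> \<psi>'" "\<forall>x\<in>circle. \<psi> x = x" "map \<psi> ps = qs"
    using exists_diffeo_moving_list[of qs ps "{}"] ps qs Q P(3) by auto
  have \<psi>P: "\<psi> ` P = Q" using \<psi>(3) ps(2) qs(2) by (metis list.set_map)
  have inv: "\<forall>x\<in>disk. \<psi>' (\<psi> x) = x" "\<forall>x\<in>disk. \<psi> (\<psi>' x) = x" "\<forall>x\<in>disk. \<psi> x \<in> disk"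
    using \<psi>(1) unfolding diffeo_pair_def by auto
  have half_rot_disk: "half_rot x \<in> disk" if "x \<in> disk" for x
    using that by (simp add: half_rot_def disk_def)
  have circle_disk: "x \<in> disk" if "x \<in> circle" for x using that by (simp add: circle_def disk_def)
  define T where "T = (\<lambda>x. \<psi>' (half_rot (\<psi> x)))"
  have "diffeo_pair T (\<lambda>x. \<psi>' (half_rot (\<psi> x)))"
    unfolding T_def
    using diffeo_pair_compose[OF diffeo_pair_sym[OF \<psi>(1)]
        diffeo_pair_compose[OF diffeo_pair_half_rot \<psi>(1)]] .
  then have "T \<in> Diff_plus" by (rule diffeo_pair_Diff_plus)
  moreover have "T ` P = P"
  proof -
    have "T ` P = \<psi>' ` (half_rot ` (\<psi> ` P))" by (auto simp: T_def image_image)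
    also have "\<dots> = \<psi>' ` (\<psi> ` P)" using \<psi>P Q(5) by simp
    also have "\<dots> = P"
    proof -
      have "P \<subseteq> disk" using P(3) by (auto simp: disk_def)
      then show ?thesis using inv(1) by (force simp: image_image)
    qed
    finally show ?thesis .
  qed
  moreover have "\<forall>x\<in>circle. T x = half_rot x"
  proof
    fix x assume x: "x \<in> circle"
    then have "half_rot x \<in> circle" by (simp add: circle_def half_rot_def)
    then have "\<psi>' (half_rot x) = half_rot x"
      using \<psi>(2) inv(1) circle_disk by metis
    then show "T x = half_rot x" using \<psi>(2) x by (simp add: T_def)
  qed
  moreover have "\<forall>x\<in>disk. T (T x) = x"
  proof
    fix x assume x: "x \<in> disk"
    have "\<psi> (T x) = half_rot (\<psi> x)" unfolding T_def using inv half_rot_disk x by simp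
    then have "T (T x) = \<psi>' (half_rot (half_rot (\<psi> x)))" by (simp add: T_def)
    then show "T (T x) = x" using inv(1) x by (simp add: half_rot_def)
  qed
  ultimately show ?thesis unfolding half_set_def by blast
qed

theorem lemma3p3:
  fixes g :: nat and P :: "complex set"
  assumes "g \<ge> 1" and "finite P" and "card P = 2 * g" and "P \<subseteq> ball 0 1"
  shows "\<exists>\<sigma>. \<sigma> \<in> hom (integer_mod_group 2) (MCG_half P) \<and>
             (\<forall>k \<in> carrier (integer_mod_group 2). bdry_class (\<sigma> k) = k)"
proof -
  obtain T where "T \<in> half_set P" "\<forall>x\<in>circle. T x = half_rot x" "\<forall>x\<in>disk. T (T x) = x"
    using exists_half_rot_involution[OF assms(2-4)] by blast
  then show ?thesis by (rule MCG_half_splitting_of_involution)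
qed

end
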